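(* Let $\mathbb{K}$ be a field of characteristic $2$, let $r\in\{2,\dots,\min(n,p)\}$, and let $\mathcal{S}:=\mathrm{S}_r(\mathbb{K})\vee\mathrm{M}_{n-r,p-r}(\mathbb{K})\subset\mathrm{M}_{n,p}(\mathbb{K})$. Let $q\geq 1$. Then the range-preserving group homomorphisms $F:\mathcal{S}\to\mathrm{M}_{n,q}(\mathbb{K})$ are exactly the maps $$M\longmapsto\left(\begin{bmatrix}M & 0_{n\times(q-p)}\end{bmatrix}+\begin{bmatrix}0_{1\times r} & R(m_{1,1})\\ \vdots&\vdots\\ 0_{1\times r} & R(m_{r,r})\\ 0_{(n-r)\times r} & 0_{(n-r)\times(q-r)}\end{bmatrix}\right)Q,$$ where $Q\in\mathrm{GL}_q(\mathbb{K})$ and $R:\mathbb{K}\to\mathrm{M}_{1,q-r}(\mathbb{K})$ is root-linear.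
   Context: $\mathrm{S}_r(\mathbb{K})\vee\mathrm{M}_{n-r,p-r}(\mathbb{K})$ is the set of matrices $\begin{bmatrix}A&C\\0&B\end{bmatrix}$ with $A$ an $r\times r$ symmetric matrix, $B\in\mathrm{M}_{n-r,p-r}(\mathbb{K})$, $C\in\mathrm{M}_{r,p-r}(\mathbb{K})$ arbitrary. A map $F$ is range-preserving when the column space of $F(M)$ equals that of $M$ for all $M$. In characteristic $2$, a map $R$ between $\mathbb{K}$-vector spaces is root-linear when it is additive and $R(\lambda^2x)=\lambda R(x)$ for all $\lambda\in\mathbb{K}$ and all $x$. *)

theory Defs
  imports "Jordan_Normal_Form.Matrix"
begin

(* S_r(K) \<or> M_{n-r,p-r}(K): n x p matrices [A C; 0 B] with A an r x r symmetric block *)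
definition sym_vee_set :: "nat \<Rightarrow> nat \<Rightarrow> nat \<Rightarrow> 'a :: zero mat set" where
  "sym_vee_set r n p = {M \<in> carrier_mat n p.
      (\<forall>i<r. \<forall>j<r. M $$ (i, j) = M $$ (j, i)) \<and>
      (\<forall>i j. r \<le> i \<and> i < n \<and> j < r \<longrightarrow> M $$ (i, j) = 0)}"

definition col_space :: "'a :: semiring_0 mat \<Rightarrow> 'a vec set" where
  "col_space M = {M *\<^sub>v v | v. v \<in> carrier_vec (dim_col M)}"

definition range_preserving_on :: "'a :: semiring_0 mat set \<Rightarrow> ('a mat \<Rightarrow> 'a mat) \<Rightarrow> bool" where
  "range_preserving_on S F \<longleftrightarrow> (\<forall>M\<in>S. col_space (F M) = col_space M)"

definition root_linear :: "('a :: field \<Rightarrow> 'a vec) \<Rightarrow> bool" where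
  "root_linear R \<longleftrightarrow> (\<forall>x y. R (x + y) = R x + R y) \<and>
                      (\<forall>l x. R (l^2 * x) = l \<cdot>\<^sub>v R x)"

definition pad_cols :: "nat \<Rightarrow> 'a :: zero mat \<Rightarrow> 'a mat" where
  "pad_cols q M = mat (dim_row M) q (\<lambda>(i, j). if j < dim_col M then M $$ (i, j) else 0)"

definition root_corr :: "nat \<Rightarrow> nat \<Rightarrow> ('a :: zero \<Rightarrow> 'a vec) \<Rightarrow> 'a mat \<Rightarrow> 'a mat" where
  "root_corr r q R M = mat (dim_row M) q
     (\<lambda>(i, j). if i < r \<and> r \<le> j then R (M $$ (i, i)) $ (j - r) else 0)"

end

theory Submission
  imports Defs "Jordan_Normal_Form.VS_Connect"
begin

(* A map of the normal form M \<mapsto> ([M 0] + corr_R(M)) Q is additive since R is,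
   and it is range preserving because [M 0] + corr_R(M) = M P T with P a zero-padding matrix
   and T unipotent; T exists since for a symmetric r \<times> r matrix A and a root-linear scalar map
   rho the column (rho(a_ii))_i lies in the column space of A (root_diagonal_in_col_space).

   Range preservation forces every row of M that
   vanishes, or every vanishing combination of two rows, to be reflected in F(M).  Applied to
   elementary and symmetric elementary matrices this yields row vectors x_k (k < p) and an
   additive, root-linear map rho with F(M) = M X + (rho(m_ii) placed in row i, i < r)
   (F_eq_model).  Range preservation on further test matrices shows that the x_k are linearly
   independent and that x_0 .. x_(r-1) remain independent modulo the x_k (k \<ge> r) and the
   image of rho.  A basis completion argument (locale row_completion) then produces an
   invertible Q whose first p rows are the x_k and whose rows r .. q-1 span the image of rho;
   the coordinates of rho(a) in these rows define R. *)

lemma col_space_mult_right_invertible: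
  fixes X :: "'a::field mat"
  assumes X: "X \<in> carrier_mat n m" and T: "T \<in> carrier_mat m k" and T': "T' \<in> carrier_mat k m"
    and TT: "T * T' = 1\<^sub>m m"
  shows "col_space (X * T) = col_space X"
proof
  show "col_space (X * T) \<subseteq> col_space X"
  proof
    fix w assume "w \<in> col_space (X * T)"
    then obtain v where v: "v \<in> carrier_vec k" and w: "w = (X * T) *\<^sub>v v"
      using T unfolding col_space_def by auto
    have "w = X *\<^sub>v (T *\<^sub>v v)" using w X T v by simp
    moreover have "T *\<^sub>v v \<in> carrier_vec (dim_col X)" using T X v by simp
    ultimately show "w \<in> col_space X" unfolding col_space_def by blast
  qed
next
  show "col_space X \<subseteq> col_space (X * T)"
  proof
    fix w assume "w \<in> col_space X"
    then obtain v where v: "v \<in> carrier_vec m" and w: "w = X *\<^sub>v v"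
      using X unfolding col_space_def by auto
    have "X *\<^sub>v v = X *\<^sub>v ((T * T') *\<^sub>v v)" using TT v by simp
    also have "\<dots> = (X * T) *\<^sub>v (T' *\<^sub>v v)" using X T T' v
      by (metis assoc_mult_mat_vec mult_carrier_mat mult_mat_vec_carrier)
    finally have "w = (X * T) *\<^sub>v (T' *\<^sub>v v)" using w by simp
    moreover have "T' *\<^sub>v v \<in> carrier_vec (dim_col (X * T))" using T T' v by simp
    ultimately show "w \<in> col_space (X * T)" unfolding col_space_def by blast
  qed
qed

(* If col A \<subseteq> col B, every row vector y with y B = 0 also satisfies y A = 0.  This is the
   only way range preservation is used in the hard direction. *)
lemma col_space_annihilator:
  fixes A B :: "'a::field mat"
  assumes A: "A \<in> carrier_mat n a" and B: "B \<in> carrier_mat n b"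
    and sub: "col_space A \<subseteq> col_space B"
    and y: "\<forall>k<b. (\<Sum>i<n. y i * B $$ (i,k)) = 0" and j: "j < a"
  shows "(\<Sum>i<n. y i * A $$ (i,j)) = 0"
proof -
  have "A *\<^sub>v unit_vec a j \<in> col_space A" unfolding col_space_def using A by auto
  with sub obtain v where v: "v \<in> carrier_vec b" and eq: "A *\<^sub>v unit_vec a j = B *\<^sub>v v"
    using B unfolding col_space_def by auto
  have entry: "A $$ (i,j) = (\<Sum>k<b. B $$ (i,k) * v $ k)" if i: "i < n" for i
  proof -
    have "(A *\<^sub>v unit_vec a j) $ i = A $$ (i,j)"
      using A i j by (simp add: scalar_prod_right_unit)
    moreover have "(B *\<^sub>v v) $ i = (\<Sum>k<b. B $$ (i,k) * v $ k)"
      using B i v by (simp add: scalar_prod_def lessThan_atLeast0)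
    ultimately show ?thesis using eq by simp
  qed
  have "(\<Sum>i<n. y i * A $$ (i,j)) = (\<Sum>i<n. \<Sum>k<b. y i * (B $$ (i,k) * v $ k))"
    by (simp add: entry sum_distrib_left)
  also have "\<dots> = (\<Sum>k<b. (\<Sum>i<n. y i * B $$ (i,k)) * v $ k)"
    by (subst sum.swap) (simp add: sum_distrib_right mult.assoc)
  also have "\<dots> = 0" using y by simp
  finally show ?thesis .
qed

lemma sum_delta_left:
  fixes f :: "nat \<Rightarrow> 'a::comm_ring_1"
  assumes "i < q" shows "(\<Sum>l<q. (if i = l then 1 else 0) * f l) = f i"
  using assms by (simp add: if_distrib if_distribR sum.delta cong: if_cong)

lemma sum_delta_right:
  fixes f :: "nat \<Rightarrow> 'a::comm_ring_1"
  assumes "j < q" shows "(\<Sum>l<q. f l * (if l = j then 1 else 0)) = f j"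
  using assms by (simp add: if_distrib sum.delta cong: if_cong)

lemma sum_if_eq_single:
  fixes g :: "nat \<Rightarrow> 'a::comm_ring_1"
  shows "(\<Sum>k'<p. (if k' = k then a else 0) * g k') = (if k < p then a * g k else 0)"
proof -
  have "(\<Sum>k'<p. (if k' = k then a else 0) * g k') = (\<Sum>k'<p. if k' = k then a * g k' else 0)"
    by (intro sum.cong) auto
  then show ?thesis by (simp add: sum.delta')
qed

lemma sum_two_points:
  fixes f :: "nat \<Rightarrow> 'a::comm_ring_1"
  assumes "a < n" "b < n" "a \<noteq> b"
  shows "(\<Sum>i<n. (if i = a then u else if i = b then v else 0) * f i) = u * f a + v * f b"
proof -
  have "(\<Sum>i<n. (if i = a then u else if i = b then v else 0) * f i)
      = (\<Sum>i<n. (if i = a then u * f i else 0)) + (\<Sum>i<n. (if i = b then v * f i else 0))"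
    unfolding sum.distrib[symmetric] using assms by (intro sum.cong) auto
  then show ?thesis using assms by (simp add: sum.delta)
qed

lemma sum_lessThan_restrict:
  fixes g :: "nat \<Rightarrow> 'a::comm_monoid_add"
  assumes "r \<le> q" shows "(\<Sum>l<q. if l < r then g l else 0) = (\<Sum>l<r. g l)"
proof -
  have "(\<Sum>l<q. if l < r then g l else 0) = (\<Sum>l\<in>{..<q} \<inter> {l. l < r}. g l)"
    by (simp add: sum.inter_restrict)
  also have "{..<q} \<inter> {l. l < r} = {..<r}" using assms by auto
  finally show ?thesis .
qed

lemma char2_two_eq_0: assumes "CHAR('a::field) = 2" shows "(2::'a) = 0"
  using of_nat_CHAR[where 'a='a] assms by simp

lemma char2_add_eq_0_iff:
  fixes x y :: "'a::field" assumes "(2::'a) = 0" shows "x + y = 0 \<longleftrightarrow> x = y"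
proof -
  have "y + y = 0" using assms by (metis mult_2 mult_zero_left)
  then have "x + y = 0 \<longleftrightarrow> x + y = y + y" by (simp only:)
  then show ?thesis by (simp only: add_right_cancel)
qed

lemma char2_square_add:
  fixes x y :: "'a::field" assumes "(2::'a) = 0" shows "(x + y)^2 = x^2 + y^2"
proof -
  have "(x + y)^2 = x^2 + y^2 + 2 * x * y" by (simp add: power2_eq_square algebra_simps)
  then show ?thesis using assms by simp
qed

(* An additive h with x h(x) additive is linear: expand (x + 1) h(x + 1). *)
lemma additive_self_mult_linear:
  fixes h :: "'a::field \<Rightarrow> 'a"
  assumes two: "(2::'a) = 0" and hadd: "\<forall>x y. h (x + y) = h x + h y"
    and h: "\<forall>x y. (x + y) * h (x + y) = x * h x + y * h y"
  shows "h x = x * h 1"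
proof -
  have "(x + 1) * (h x + h 1) = x * h x + 1 * h 1" using h hadd by metis
  then have "x * h 1 + h x = 0" by (simp add: algebra_simps)
  then show ?thesis using char2_add_eq_0_iff[OF two] by (metis add.commute)
qed

(* The functional equation produced by a symmetric 2 \<times> 2 block: f, g are the images of the two
   diagonal entries and alpha, beta the two rows of the image of the off-diagonal entry. *)
lemma char2_pair_equation:
  fixes f g \<alpha> \<beta> :: "'a::field \<Rightarrow> 'a"
  assumes two: "(2::'a) = 0"
    and fa: "\<forall>x y. f (x + y) = f x + f y" and ga: "\<forall>x y. g (x + y) = g x + g y"
    and aa: "\<forall>x y. \<alpha> (x + y) = \<alpha> x + \<alpha> y" and ba: "\<forall>x y. \<beta> (x + y) = \<beta> x + \<beta> y"
    and eq: "\<forall>k l m. m * (f (k * l^2) + \<alpha> (k * l * m)) + l * (\<beta> (k * l * m) + g (k * m^2)) = 0"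
  shows "\<forall>b. \<alpha> b = b * \<alpha> 1" "\<forall>b. \<beta> b = b * \<beta> 1"
    "\<forall>k l. f (k * l^2) + k * l^2 * \<beta> 1 = l * (f k + k * \<beta> 1)"
    "\<forall>x. g x + x * \<alpha> 1 = f x + x * \<beta> 1"
proof -
  note c2 = char2_add_eq_0_iff[OF two]
  have eq_kl1: "m * \<alpha> m = m * f 1 + \<beta> m + g (m^2)" for m
  proof -
    have "m * (f 1 + \<alpha> m) + (\<beta> m + g (m^2)) = 0" using eq[rule_format, where k=1 and l=1 and m=m] by simp
    then have "m * \<alpha> m + (m * f 1 + \<beta> m + g (m^2)) = 0" by (simp add: algebra_simps)
    then show ?thesis by (simp only: c2)
  qed
  have eq_km1: "l * \<beta> l = f (l^2) + \<alpha> l + l * g 1" for l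
  proof -
    have "f (l^2) + \<alpha> l + l * (\<beta> l + g 1) = 0" using eq[rule_format, where k=1 and l=l and m=1] by simp
    then have "l * \<beta> l + (f (l^2) + \<alpha> l + l * g 1) = 0" by (simp add: algebra_simps)
    then show ?thesis by (simp only: c2)
  qed
  have alpha_linear: "\<alpha> b = b * \<alpha> 1" for b
  proof (rule additive_self_mult_linear[OF two aa], intro allI)
    fix x y :: 'a
    have "\<beta> (x + y) = \<beta> x + \<beta> y" "g (x^2 + y^2) = g (x^2) + g (y^2)" using ba ga by blast+
    then show "(x + y) * \<alpha> (x + y) = x * \<alpha> x + y * \<alpha> y"
      unfolding eq_kl1 char2_square_add[OF two] by (simp add: distrib_right add_ac)
  qed
  have beta_linear: "\<beta> b = b * \<beta> 1" for b
  proof (rule additive_self_mult_linear[OF two ba], intro allI)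
    fix x y :: 'a
    have "\<alpha> (x + y) = \<alpha> x + \<alpha> y" "f (x^2 + y^2) = f (x^2) + f (y^2)" using fa aa by blast+
    then show "(x + y) * \<beta> (x + y) = x * \<beta> x + y * \<beta> y"
      unfolding eq_km1 char2_square_add[OF two] by (simp add: distrib_right add_ac)
  qed
  have eq_m1: "f (k * l^2) + k * l^2 * \<beta> 1 + l * (k * \<alpha> 1 + g k) = 0" for k l
  proof -
    have "f (k * l^2) + \<alpha> (k * l) + l * (\<beta> (k * l) + g k) = 0"
      using eq[rule_format, where k=k and l=l and m=1] by simp
    then show ?thesis unfolding alpha_linear[of "k*l"] beta_linear[of "k*l"] by (simp add: algebra_simps power2_eq_square)
  qed
  have f_g_relation: "g x + x * \<alpha> 1 = f x + x * \<beta> 1" for x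
  proof -
    have "(f x + x * \<beta> 1) + (x * \<alpha> 1 + g x) = 0" using eq_m1[of x 1] by simp
    then show ?thesis using c2 by (simp add: add.commute)
  qed
  show "\<forall>b. \<alpha> b = b * \<alpha> 1" "\<forall>b. \<beta> b = b * \<beta> 1" "\<forall>x. g x + x * \<alpha> 1 = f x + x * \<beta> 1"
    using alpha_linear beta_linear f_g_relation by blast+
  show "\<forall>k l. f (k * l^2) + k * l^2 * \<beta> 1 = l * (f k + k * \<beta> 1)"
  proof (intro allI)
    fix k l
    have "k * \<alpha> 1 + g k = f k + k * \<beta> 1" using f_g_relation[of k] by (metis add.commute)
    then have "(f (k * l^2) + k * l^2 * \<beta> 1) + l * (f k + k * \<beta> 1) = 0" using eq_m1[of k l] by simp
    then show "f (k * l^2) + k * l^2 * \<beta> 1 = l * (f k + k * \<beta> 1)" by (simp only: c2)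
  qed
qed

(* One step of symmetric Gaussian elimination with pivot a_kk \<noteq> 0: a solution v' of the problem
   for the reduced matrix A' = A - (column k)(row k)/a_kk lifts to a solution for A, because
   a_ii = a'_ii + a_ik^2/a_kk and rho(a_ik^2/a_kk) = a_ik rho(1/a_kk). *)
lemma root_diagonal_elimination_step:
  fixes A :: "nat \<Rightarrow> nat \<Rightarrow> 'a::field" and \<rho> :: "'a \<Rightarrow> 'a"
  assumes sym: "\<forall>i<r. \<forall>j<r. A i j = A j i"
    and radd: "\<forall>x y. \<rho> (x + y) = \<rho> x + \<rho> y"
    and rroot: "\<forall>l x. \<rho> (l^2 * x) = l * \<rho> x"
    and k: "k < r" "A k k \<noteq> 0"
    and A'_def: "A' = (\<lambda>i j. A i j - A i k * A k j / A k k)"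
    and v': "\<forall>i<r. (\<Sum>j<r. A' i j * v' j) = \<rho> (A' i i)"
  shows "\<exists>v. \<forall>i<r. (\<Sum>j<r. A i j * v j) = \<rho> (A i i)"
proof -
  define s where "s = (\<Sum>j<r. A k j * v' j)"
  define t where "t = \<rho> (1 / A k k) - s / A k k"
  define v where "v = (\<lambda>j. v' j + (if j = k then t else 0))"
  show ?thesis
  proof (intro exI[of _ v] allI impI)
    fix i assume i: "i < r"
    have "(\<Sum>j<r. A i j * v j) = (\<Sum>j<r. A i j * v' j) + (\<Sum>j<r. A i j * (if j = k then t else 0))"
      unfolding v_def by (simp add: distrib_left sum.distrib)
    also have "(\<Sum>j<r. A i j * (if j = k then t else 0)) = A i k * t"
      using k by (simp add: if_distrib sum.delta cong: if_cong)
    also have "(\<Sum>j<r. A i j * v' j) = (\<Sum>j<r. A' i j * v' j + A i k / A k k * (A k j * v' j))"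
      unfolding A'_def by (intro sum.cong) (auto simp: algebra_simps)
    also have "\<dots> = \<rho> (A' i i) + A i k / A k k * s"
      unfolding sum.distrib s_def sum_distrib_left[symmetric] using v' i by simp
    also have "\<rho> (A' i i) + A i k / A k k * s + A i k * t = \<rho> (A' i i) + A i k * \<rho> (1 / A k k)"
      unfolding t_def by (simp add: right_diff_distrib)
    also have "\<dots> = \<rho> (A' i i + (A i k)^2 * (1 / A k k))"
      using radd rroot by metis
    also have "A' i i + (A i k)^2 * (1 / A k k) = A i i"
      unfolding A'_def using sym i k by (simp add: power2_eq_square)
    finally show "(\<Sum>j<r. A i j * v j) = \<rho> (A i i)" .
  qed
qed

(* Induction on the number of nonzero rows, eliminating a nonzero diagonal
   pivot; if the diagonal vanishes the column is zero. *)
lemma root_diagonal_in_col_space: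
  fixes A :: "nat \<Rightarrow> nat \<Rightarrow> 'a::field" and \<rho> :: "'a \<Rightarrow> 'a"
  assumes sym: "\<forall>i<r. \<forall>j<r. A i j = A j i"
    and radd: "\<forall>x y. \<rho> (x + y) = \<rho> x + \<rho> y"
    and rroot: "\<forall>l x. \<rho> (l^2 * x) = l * \<rho> x"
  shows "\<exists>v. \<forall>i<r. (\<Sum>j<r. A i j * v j) = \<rho> (A i i)"
  using sym
proof (induction "card {i. i < r \<and> (\<exists>j<r. A i j \<noteq> 0)}" arbitrary: A rule: less_induct)
  case less
  have r0: "\<rho> 0 = 0" using radd by (metis add_cancel_right_right add_0)
  show ?case
  proof (cases "\<forall>i<r. A i i = 0")
    case True
    then show ?thesis by (intro exI[of _ "\<lambda>_. 0"]) (simp add: r0)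
  next
    case False
    then obtain k where k: "k < r" "A k k \<noteq> 0" by auto
    define A' where "A' = (\<lambda>i j. A i j - A i k * A k j / A k k)"
    have symA': "\<forall>i<r. \<forall>j<r. A' i j = A' j i"
      using less.prems k unfolding A'_def by (auto simp: mult.commute)
    let ?S = "\<lambda>B. {i. i < r \<and> (\<exists>j<r. B i j \<noteq> 0)}"
    have sub: "?S A' \<subseteq> ?S A - {k}"
    proof
      fix i assume "i \<in> ?S A'"
      then obtain j where ij: "i < r" "j < r" "A' i j \<noteq> 0" by auto
      have "i \<noteq> k" using ij k unfolding A'_def by auto
      moreover have "A i j \<noteq> 0 \<or> A i k \<noteq> 0" using ij unfolding A'_def by auto
      ultimately show "i \<in> ?S A - {k}" using ij k by auto
    qed
    have fin: "finite (?S A)" by auto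
    have "card (?S A') \<le> card (?S A - {k})" using sub fin by (intro card_mono) auto
    also have "\<dots> < card (?S A)" using k fin by (intro card_Diff1_less) auto
    finally obtain v' where v': "\<forall>i<r. (\<Sum>j<r. A' i j * v' j) = \<rho> (A' i i)"
      using less.hyps[OF _ symA'] by blast
    show ?thesis by (rule root_diagonal_elimination_step[OF less.prems radd rroot k A'_def v'])
  qed
qed

lemma invertible_mat_right_inverse:
  fixes Q :: "'a::comm_ring_1 mat"
  assumes Q: "Q \<in> carrier_mat q q" and inv: "invertible_mat Q"
  shows "\<exists>B \<in> carrier_mat q q. Q * B = 1\<^sub>m q \<and> B * Q = 1\<^sub>m q"
proof -
  obtain B where B: "Q * B = 1\<^sub>m (dim_row Q)" "B * Q = 1\<^sub>m (dim_row B)"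
    using inv unfolding invertible_mat_def inverts_mat_def by blast
  have "dim_col B = q" using B(1) Q by (metis index_mult_mat(3) index_one_mat(3) carrier_matD(1))
  moreover have "dim_row B = q" using B(2) Q by (metis index_mult_mat(3) index_one_mat(3) carrier_matD(2))
  ultimately show ?thesis using B Q by (intro bexI[of _ B]) auto
qed

definition partial_id :: "nat \<Rightarrow> nat \<Rightarrow> 'a::{zero,one} mat" where
  "partial_id p q = mat p q (\<lambda>(l,j). if l = j then 1 else 0)"

lemma partial_id_carrier: "partial_id p q \<in> carrier_mat p q"
  unfolding partial_id_def by simp

lemma pad_cols_as_mult:
  fixes M :: "'a::comm_ring_1 mat"
  assumes M: "M \<in> carrier_mat n p"
  shows "pad_cols q M = M * partial_id p q"
proof (rule eq_matI)
  fix i j assume "i < dim_row (M * partial_id p q)" "j < dim_col (M * partial_id p q)"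
  then have i: "i < n" and j: "j < q" using M by (auto simp: partial_id_def)
  have "(M * partial_id p q) $$ (i,j) = (\<Sum>l<p. M $$ (i,l) * (if l = j then 1 else 0))"
    using M i j by (simp add: partial_id_def scalar_prod_def lessThan_atLeast0)
  also have "\<dots> = (if j < p then M $$ (i,j) else 0)"
    by (simp add: if_distrib sum.delta cong: if_cong)
  finally show "pad_cols q M $$ (i,j) = (M * partial_id p q) $$ (i,j)"
    using M i j unfolding pad_cols_def by simp
qed (insert M, auto simp: pad_cols_def partial_id_def)

lemma partial_id_right_inverse:
  assumes pq: "p \<le> q"
  shows "partial_id p q * partial_id q p = (1\<^sub>m p :: 'a::comm_ring_1 mat)"
proof (rule eq_matI)
  fix i j assume "i < dim_row (1\<^sub>m p :: 'a mat)" "j < dim_col (1\<^sub>m p :: 'a mat)"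
  then have i: "i < p" and j: "j < p" by auto
  have "(partial_id p q * partial_id q p) $$ (i,j)
      = (\<Sum>l<q. (if i = l then 1 else 0) * (if l = j then 1 else 0) :: 'a)"
    using i j pq by (simp add: partial_id_def scalar_prod_def lessThan_atLeast0)
  also have "\<dots> = (if i = j then 1 else 0)" using i pq by (subst sum_delta_left) auto
  finally show "(partial_id p q * partial_id q p) $$ (i,j) = (1\<^sub>m p :: 'a mat) $$ (i,j)"
    using i j by simp
qed (auto simp: partial_id_def)

(* I + N with N supported in rows < r and columns \<ge> r satisfies N^2 = 0, so I - N is its inverse. *)
lemma unipotent_right_inverse:
  fixes N :: "nat \<Rightarrow> nat \<Rightarrow> 'a::comm_ring_1"
  assumes N: "\<And>l m. N l m \<noteq> 0 \<Longrightarrow> l < r \<and> r \<le> m"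
  shows "mat q q (\<lambda>(l,j). (if l = j then 1 else 0) + N l j) * mat q q (\<lambda>(l,j). (if l = j then 1 else 0) - N l j)
        = 1\<^sub>m q"
proof (rule eq_matI)
  fix i j assume "i < dim_row (1\<^sub>m q :: 'a mat)" "j < dim_col (1\<^sub>m q :: 'a mat)"
  then have i: "i < q" and j: "j < q" by auto
  have NN: "N i l * N l j = 0" for l
    using N[of i l] N[of l j] by (metis mult_zero_left mult_zero_right not_less)
  have "(mat q q (\<lambda>(l,j). (if l = j then 1 else 0) + N l j) * mat q q (\<lambda>(l,j). (if l = j then 1 else 0) - N l j)) $$ (i,j)
      = (\<Sum>l<q. ((if i = l then 1 else 0) + N i l) * ((if l = j then 1 else 0) - N l j))"
    using i j by (simp add: scalar_prod_def lessThan_atLeast0)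
  also have "\<dots> = (\<Sum>l<q. (if i = l then 1 else 0) * (if l = j then 1 else 0)) - (\<Sum>l<q. (if i = l then 1 else 0) * N l j)
       + (\<Sum>l<q. N i l * (if l = j then 1 else 0)) - (\<Sum>l<q. N i l * N l j)"
    by (simp add: algebra_simps sum.distrib sum_subtractf)
  also have "\<dots> = (if i = j then 1 else 0)"
    using i j NN by (simp add: sum_delta_left sum_delta_right)
  finally show "(mat q q (\<lambda>(l,j). (if l = j then 1 else 0) + N l j) * mat q q (\<lambda>(l,j). (if l = j then 1 else 0) - N l j)) $$ (i,j) = 1\<^sub>m q $$ (i,j)"
    using i j by simp
qed auto

lemma sym_vee_set_add:
  assumes "M \<in> sym_vee_set r n p" "N \<in> sym_vee_set r n p" "r \<le> n" "r \<le> p"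
  shows "M + N \<in> (sym_vee_set r n p :: 'a::monoid_add mat set)"
  using assms unfolding sym_vee_set_def by auto

lemma sym_vee_set_zero:
  assumes "r \<le> n" "r \<le> p" shows "0\<^sub>m n p \<in> (sym_vee_set r n p :: 'a::zero mat set)"
  using assms unfolding sym_vee_set_def by auto

lemma pad_cols_carrier: "M \<in> carrier_mat n p \<Longrightarrow> pad_cols q M \<in> carrier_mat n q"
  unfolding pad_cols_def by auto

lemma root_corr_carrier: "M \<in> carrier_mat n p \<Longrightarrow> root_corr r q R M \<in> carrier_mat n q"
  unfolding root_corr_def by auto

lemma pad_cols_dim [simp]: "dim_row (pad_cols q M) = dim_row M" "dim_col (pad_cols q M) = q"
  unfolding pad_cols_def by auto

lemma root_corr_dim [simp]: "dim_row (root_corr r q R M) = dim_row M" "dim_col (root_corr r q R M) = q"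
  unfolding root_corr_def by auto

lemma root_linear_index:
  assumes "root_linear R" "\<forall>x. R x \<in> carrier_vec m" "t < m"
  shows "R (x + y) $ t = R x $ t + R y $ t" "R (l^2 * x) $ t = l * R x $ t"
  using assms unfolding root_linear_def by (metis carrier_vecD index_add_vec(1) index_smult_vec(1))+

lemma pad_cols_index:
  "i < dim_row M \<Longrightarrow> j < q \<Longrightarrow> pad_cols q M $$ (i,j) = (if j < dim_col M then M $$ (i,j) else 0)"
  unfolding pad_cols_def by simp

lemma root_corr_index:
  "i < dim_row M \<Longrightarrow> j < q \<Longrightarrow>
   root_corr r q R M $$ (i,j) = (if i < r \<and> r \<le> j then R (M $$ (i,i)) $ (j - r) else 0)"
  unfolding root_corr_def by simp

lemma root_corr_outside:
  "i < dim_row M \<Longrightarrow> j < q \<Longrightarrow> \<not> (i < r \<and> r \<le> j) \<Longrightarrow> root_corr r q R M $$ (i,j) = 0"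
  unfolding root_corr_def by auto

lemma normal_form_additive:
  fixes R :: "'a::field \<Rightarrow> 'a vec"
  assumes rp: "r \<le> p" and Rc: "\<forall>x. R x \<in> carrier_vec (q - r)" and Rl: "root_linear R"
    and M: "M \<in> carrier_mat n p" and N: "N \<in> carrier_mat n p"
  shows "pad_cols q (M + N) + root_corr r q R (M + N)
       = (pad_cols q M + root_corr r q R M) + (pad_cols q N + root_corr r q R N)"
    (is "?L = ?R")
proof (rule eq_matI)
  show "dim_row ?L = dim_row ?R" "dim_col ?L = dim_col ?R" using M N by auto
  fix i j assume "i < dim_row ?R" "j < dim_col ?R"
  then have i: "i < n" and j: "j < q" using N by auto
  have pad: "pad_cols q (M + N) $$ (i,j) = pad_cols q M $$ (i,j) + pad_cols q N $$ (i,j)"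
    using i j M N by (simp add: pad_cols_index)
  have corr: "root_corr r q R (M + N) $$ (i,j) = root_corr r q R M $$ (i,j) + root_corr r q R N $$ (i,j)"
  proof (cases "i < r \<and> r \<le> j")
    case True
    then have "(M + N) $$ (i,i) = M $$ (i,i) + N $$ (i,i)" using i rp M N by simp
    moreover have "j - r < q - r" using True j by arith
    ultimately show ?thesis using True i j M N root_linear_index(1)[OF Rl Rc, of "j - r"]
      by (simp add: root_corr_index)
  next
    case False
    then show ?thesis using i j M N by (simp add: root_corr_outside)
  qed
  have "?L $$ (i, j) = pad_cols q (M + N) $$ (i,j) + root_corr r q R (M + N) $$ (i,j)"
    using i j M N by simp
  moreover have "?R $$ (i, j) = (pad_cols q M $$ (i,j) + root_corr r q R M $$ (i,j))
      + (pad_cols q N $$ (i,j) + root_corr r q R N $$ (i,j))"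
    using i j M N by simp
  ultimately show "?L $$ (i, j) = ?R $$ (i, j)" unfolding pad corr by (simp add: add_ac)
qed

(* The correction term is a right multiplication by a unipotent matrix: its rows r .. q-1 in
   the columns < r are a solution U of A U = (rho(a_ii)) from root_diagonal_in_col_space. *)
lemma normal_form_unipotent_factor:
  fixes R :: "'a::field \<Rightarrow> 'a vec"
  assumes rp: "r \<le> p" and pq: "p \<le> q"
    and Rc: "\<forall>x. R x \<in> carrier_vec (q - r)" and Rl: "root_linear R"
    and M: "M \<in> sym_vee_set r n p"
  shows "\<exists>T \<in> carrier_mat q q. \<exists>T' \<in> carrier_mat q q. T * T' = 1\<^sub>m q \<and>
           pad_cols q M * T = pad_cols q M + root_corr r q R M"
proof -
  have Mc: "M \<in> carrier_mat n p" and Msym: "\<forall>i<r. \<forall>j<r. M $$ (i,j) = M $$ (j,i)"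
    and Mlow: "\<forall>i j. r \<le> i \<and> i < n \<and> j < r \<longrightarrow> M $$ (i, j) = 0"
    using M unfolding sym_vee_set_def by auto
  have "\<exists>v. \<forall>i<r. (\<Sum>j<r. M $$ (i,j) * v j) = R (M $$ (i,i)) $ t" if t: "t < q - r" for t
    by (rule root_diagonal_in_col_space[OF Msym]) (use root_linear_index[OF Rl Rc t] in auto)
  then obtain U where U: "\<forall>t<q-r. \<forall>i<r. (\<Sum>j<r. M $$ (i,j) * U t j) = R (M $$ (i,i)) $ t"
    by metis
  define N where "N = (\<lambda>l j. if l < r \<and> r \<le> j then U (j - r) l else (0::'a))"
  define T where "T = mat q q (\<lambda>(l,j). (if l = j then 1 else 0) + N l j)"
  define T' where "T' = mat q q (\<lambda>(l,j). (if l = j then 1 else 0) - N l j)"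
  have TT: "T * T' = 1\<^sub>m q" unfolding T_def T'_def
    by (rule unipotent_right_inverse) (auto simp: N_def split: if_splits)
  have "pad_cols q M * T = pad_cols q M + root_corr r q R M"
  proof (rule eq_matI)
    fix i j assume "i < dim_row (pad_cols q M + root_corr r q R M)" "j < dim_col (pad_cols q M + root_corr r q R M)"
    then have i: "i < n" and j: "j < q" using Mc unfolding root_corr_def by auto
    have "(pad_cols q M * T) $$ (i,j) = (\<Sum>l<q. pad_cols q M $$ (i,l) * ((if l = j then 1 else 0) + N l j))"
      using i j Mc unfolding T_def pad_cols_def by (simp add: scalar_prod_def lessThan_atLeast0)
    also have "\<dots> = pad_cols q M $$ (i,j) + (\<Sum>l<q. pad_cols q M $$ (i,l) * N l j)"
      using j by (simp add: distrib_left sum.distrib sum_delta_right)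
    also have "(\<Sum>l<q. pad_cols q M $$ (i,l) * N l j) = (\<Sum>l<q. if l < r then (if r \<le> j then M $$ (i,l) * U (j - r) l else 0) else 0)"
      using i Mc rp pq unfolding N_def pad_cols_def by (intro sum.cong) auto
    also have "\<dots> = (\<Sum>l<r. (if r \<le> j then M $$ (i,l) * U (j - r) l else 0))"
      using rp pq by (intro sum_lessThan_restrict) auto
    also have "\<dots> = root_corr r q R M $$ (i,j)"
    proof (cases "i < r")
      case True
      then show ?thesis using U i j Mc unfolding root_corr_def by auto
    next
      case False
      then show ?thesis using Mlow i j Mc unfolding root_corr_def by (auto intro!: sum.neutral)
    qed
    finally show "(pad_cols q M * T) $$ (i,j) = (pad_cols q M + root_corr r q R M) $$ (i,j)"
      using i j Mc unfolding root_corr_def pad_cols_def by simp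
  qed (insert Mc, auto simp: pad_cols_def T_def root_corr_def)
  moreover have "T \<in> carrier_mat q q" "T' \<in> carrier_mat q q" unfolding T_def T'_def by auto
  ultimately show ?thesis using TT by blast
qed

lemma normal_form_is_range_preserving_hom:
  fixes F :: "'a::field mat \<Rightarrow> 'a mat" and R :: "'a \<Rightarrow> 'a vec"
  assumes rn: "r \<le> n" and rp: "r \<le> p" and pq: "p \<le> q"
    and Q: "Q \<in> carrier_mat q q" and Qinv: "invertible_mat Q"
    and Rc: "\<forall>x. R x \<in> carrier_vec (q - r)" and Rl: "root_linear R"
    and FM: "\<forall>M \<in> sym_vee_set r n p. F M = (pad_cols q M + root_corr r q R M) * Q"
  shows "(\<forall>M \<in> sym_vee_set r n p. F M \<in> carrier_mat n q) \<and>
         (\<forall>M \<in> sym_vee_set r n p. \<forall>N \<in> sym_vee_set r n p. F (M + N) = F M + F N) \<and>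
         range_preserving_on (sym_vee_set r n p) F"
proof (intro conjI ballI)
  have Mc: "M \<in> carrier_mat n p" if "M \<in> sym_vee_set r n p" for M
    using that unfolding sym_vee_set_def by auto
  have FMc: "pad_cols q M + root_corr r q R M \<in> carrier_mat n q" if "M \<in> sym_vee_set r n p" for M
    using pad_cols_carrier[OF Mc[OF that]] root_corr_carrier[OF Mc[OF that]] by simp
  show "F M \<in> carrier_mat n q" if M: "M \<in> sym_vee_set r n p" for M
    using FM M FMc[OF M] Q by simp
  show "F (M + N) = F M + F N" if M: "M \<in> sym_vee_set r n p" and N: "N \<in> sym_vee_set r n p" for M N
  proof -
    have "F (M + N) = ((pad_cols q M + root_corr r q R M) + (pad_cols q N + root_corr r q R N)) * Q"
      using FM sym_vee_set_add[OF M N rn rp] normal_form_additive[OF rp Rc Rl Mc[OF M] Mc[OF N]] by simp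
    also have "\<dots> = F M + F N"
      using FM M N add_mult_distrib_mat[OF FMc[OF M] FMc[OF N] Q] by simp
    finally show ?thesis .
  qed
  show "range_preserving_on (sym_vee_set r n p) F"
    unfolding range_preserving_on_def
  proof
    fix M :: "'a mat" assume M: "M \<in> sym_vee_set r n p"
    obtain T T' where T: "T \<in> carrier_mat q q" "T' \<in> carrier_mat q q" "T * T' = 1\<^sub>m q"
      and padT: "pad_cols q M * T = pad_cols q M + root_corr r q R M"
      using normal_form_unipotent_factor[OF rp pq Rc Rl M] by blast
    obtain B where B: "B \<in> carrier_mat q q" "Q * B = 1\<^sub>m q"
      using invertible_mat_right_inverse[OF Q Qinv] by blast
    have P: "partial_id p q \<in> carrier_mat p q" "partial_id q p \<in> carrier_mat q p"
      by (simp_all add: partial_id_carrier)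
    have MP: "M * partial_id p q \<in> carrier_mat n q" using Mc[OF M] P by (metis mult_carrier_mat)
    have "F M = ((M * partial_id p q) * T) * Q"
      using FM M padT pad_cols_as_mult[OF Mc[OF M]] by simp
    moreover have "(M * partial_id p q) * T \<in> carrier_mat n q" using MP T by simp
    ultimately have "col_space (F M) = col_space ((M * partial_id p q) * T)"
      using col_space_mult_right_invertible[OF _ Q B] by simp
    also have "\<dots> = col_space (M * partial_id p q)"
      using col_space_mult_right_invertible[OF MP T] .
    also have "\<dots> = col_space M"
      using col_space_mult_right_invertible[OF Mc[OF M] P partial_id_right_inverse[OF pq]] .
    finally show "col_space (F M) = col_space M" .
  qed
qed
definition elem_mat :: "nat \<Rightarrow> nat \<Rightarrow> nat \<Rightarrow> nat \<Rightarrow> 'a::zero \<Rightarrow> 'a mat" where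
  "elem_mat n p i k a = mat n p (\<lambda>(i',k'). if i' = i \<and> k' = k then a else 0)"

definition sym_elem_mat :: "nat \<Rightarrow> nat \<Rightarrow> nat \<Rightarrow> nat \<Rightarrow> 'a::zero \<Rightarrow> 'a mat" where
  "sym_elem_mat n p i j b = mat n p (\<lambda>(i',k'). if (i' = i \<and> k' = j) \<or> (i' = j \<and> k' = i) then b else 0)"

lemma sym_elem_mat_swap: "sym_elem_mat n p i j b = sym_elem_mat n p j i b"
  unfolding sym_elem_mat_def by (intro eq_matI) auto

lemma elem_mat_add: "elem_mat n p i k (a + b) = elem_mat n p i k a + (elem_mat n p i k b :: 'a::monoid_add mat)"
  unfolding elem_mat_def by (intro eq_matI) auto

lemma sym_elem_mat_add: "sym_elem_mat n p i j (a + b) = sym_elem_mat n p i j a + (sym_elem_mat n p i j b :: 'a::monoid_add mat)"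
  unfolding sym_elem_mat_def by (intro eq_matI) auto

lemma elem_mat_dim[simp]: "dim_row (elem_mat n p i k a) = n" "dim_col (elem_mat n p i k a) = p" unfolding elem_mat_def by auto
lemma sym_elem_mat_dim[simp]: "dim_row (sym_elem_mat n p i j b) = n" "dim_col (sym_elem_mat n p i j b) = p" unfolding sym_elem_mat_def by auto

lemma elem_mat_carrier[simp]: "elem_mat n p i k a \<in> carrier_mat n p" unfolding elem_mat_def by auto
lemma sym_elem_mat_carrier[simp]: "sym_elem_mat n p i j b \<in> carrier_mat n p" unfolding sym_elem_mat_def by auto

lemma elem_mat_index[simp]: "l < n \<Longrightarrow> k' < p \<Longrightarrow> elem_mat n p i k a $$ (l,k') = (if l = i \<and> k' = k then a else 0)"
  unfolding elem_mat_def by auto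
lemma sym_elem_mat_index[simp]: "l < n \<Longrightarrow> k' < p \<Longrightarrow> sym_elem_mat n p i j b $$ (l,k') = (if (l = i \<and> k' = j) \<or> (l = j \<and> k' = i) then b else 0)"
  unfolding sym_elem_mat_def by auto

locale range_preserving_hom =
  fixes F :: "'a::field mat \<Rightarrow> 'a mat" and n p q r :: nat
  assumes two: "(2::'a) = 0" and r2: "2 \<le> r" and rn: "r \<le> n" and rp: "r \<le> p"
    and Fc: "\<forall>M \<in> sym_vee_set r n p. F M \<in> carrier_mat n q"
    and Fadd: "\<forall>M \<in> sym_vee_set r n p. \<forall>N \<in> sym_vee_set r n p. F (M + N) = F M + F N"
    and Frp: "range_preserving_on (sym_vee_set r n p) F"
begin

abbreviation "S \<equiv> (sym_vee_set r n p :: 'a mat set)"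

lemma elem_mat_in_S: "i < n \<Longrightarrow> r \<le> k \<Longrightarrow> k < p \<Longrightarrow> elem_mat n p i k a \<in> S"
  using rn rp unfolding sym_vee_set_def by auto
lemma diag_elem_mat_in_S: "i < r \<Longrightarrow> elem_mat n p i i a \<in> S"
  using rn rp unfolding sym_vee_set_def by auto
lemma sym_elem_mat_in_S: "i < r \<Longrightarrow> j < r \<Longrightarrow> sym_elem_mat n p i j b \<in> S"
  using rn rp unfolding sym_vee_set_def by auto
lemma S_add: "M \<in> S \<Longrightarrow> N \<in> S \<Longrightarrow> M + N \<in> S"
  using sym_vee_set_add rn rp by blast
lemma S_carrier: "M \<in> S \<Longrightarrow> M \<in> carrier_mat n p"
  unfolding sym_vee_set_def by auto

lemma image_annihilator:
  assumes M: "M \<in> S" and y: "\<forall>k<p. (\<Sum>i<n. y i * M $$ (i,k)) = 0" and j: "j < q"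
  shows "(\<Sum>i<n. y i * F M $$ (i,j)) = 0"
  using col_space_annihilator[OF Fc[rule_format, OF M] S_carrier[OF M] _ y j] Frp M
  unfolding range_preserving_on_def by auto

lemma source_annihilator:
  assumes M: "M \<in> S" and y: "\<forall>j<q. (\<Sum>i<n. y i * F M $$ (i,j)) = 0" and k: "k < p"
  shows "(\<Sum>i<n. y i * M $$ (i,k)) = 0"
  using col_space_annihilator[OF S_carrier[OF M] Fc[rule_format, OF M] _ y k] Frp M
  unfolding range_preserving_on_def by auto

lemma zero_row_preserved:
  assumes M: "M \<in> S" and l: "l < n" and z: "\<forall>k<p. M $$ (l,k) = 0" and j: "j < q"
  shows "F M $$ (l,j) = 0"
proof -
  have "(\<Sum>i<n. (if i = l then 1 else 0) * F M $$ (i,j)) = 0"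
    by (rule image_annihilator[OF M _ j]) (use l z in \<open>simp add: sum_if_eq_single\<close>)
  then show ?thesis using l by (simp add: sum_if_eq_single)
qed

lemma row_relation_preserved:
  assumes M: "M \<in> S" and a: "a < n" and b: "b < n" and ab: "a \<noteq> b"
    and z: "\<forall>k<p. u * M $$ (a,k) + v * M $$ (b,k) = 0" and j: "j < q"
  shows "u * F M $$ (a,j) + v * F M $$ (b,j) = 0"
proof -
  have "(\<Sum>i<n. (if i = a then u else if i = b then v else 0) * F M $$ (i,j)) = 0"
    by (rule image_annihilator[OF M _ j]) (use a b ab z in \<open>simp add: sum_two_points\<close>)
  then show ?thesis using a b ab by (simp add: sum_two_points)
qed

lemma F_zero: "F (0\<^sub>m n p) = 0\<^sub>m n q"
proof -
  have z: "0\<^sub>m n p \<in> S" using sym_vee_set_zero rn rp by blast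
  have e: "F (0\<^sub>m n p) = F (0\<^sub>m n p) + F (0\<^sub>m n p)" using Fadd z by (metis left_add_zero_mat zero_carrier_mat)
  show ?thesis
  proof (rule eq_matI)
    fix i j assume "i < dim_row (0\<^sub>m n q :: 'a mat)" "j < dim_col (0\<^sub>m n q :: 'a mat)"
    then have ij: "i < n" "j < q" by auto
    have "F (0\<^sub>m n p) $$ (i,j) = F (0\<^sub>m n p) $$ (i,j) + F (0\<^sub>m n p) $$ (i,j)"
      using arg_cong[OF e, of "\<lambda>X. X $$ (i,j)"] Fc z ij by auto
    then have "F (0\<^sub>m n p) $$ (i,j) = 0" by (metis add_cancel_right_right)
    then show "F (0\<^sub>m n p) $$ (i,j) = (0\<^sub>m n q :: 'a mat) $$ (i,j)" using ij by simp
  qed (use Fc z in auto)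
qed

lemma F_add_entry:
  assumes "M \<in> S" "N \<in> S" "l < n" "j < q"
  shows "F (M + N) $$ (l,j) = F M $$ (l,j) + F N $$ (l,j)"
  using Fadd assms Fc by auto

lemma char2_add_eq_0: "x + y = 0 \<longleftrightarrow> x = (y::'a)" by (rule char2_add_eq_0_iff[OF two])

lemma elem_mat_image_other_rows: "i < n \<Longrightarrow> r \<le> k \<Longrightarrow> k < p \<Longrightarrow> l < n \<Longrightarrow> l \<noteq> i \<Longrightarrow> j < q \<Longrightarrow>
   F (elem_mat n p i k a) $$ (l,j) = 0"
  by (rule zero_row_preserved[OF elem_mat_in_S]) auto

lemma diag_elem_image_other_rows: "i < r \<Longrightarrow> l < n \<Longrightarrow> l \<noteq> i \<Longrightarrow> j < q \<Longrightarrow> F (elem_mat n p i i a) $$ (l,j) = 0"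
  by (rule zero_row_preserved[OF diag_elem_mat_in_S]) auto

lemma sym_elem_image_other_rows: "i < r \<Longrightarrow> i' < r \<Longrightarrow> l < n \<Longrightarrow> l \<noteq> i \<Longrightarrow> l \<noteq> i' \<Longrightarrow> j < q \<Longrightarrow> F (sym_elem_mat n p i i' b) $$ (l,j) = 0"
  by (rule zero_row_preserved[OF sym_elem_mat_in_S]) auto

(* Testing a E_ik + b E_i'k against the relation b (row i) + a (row i') = 0 (note 2 = 0); taking
   a = 1 shows that the image of a E_ik in row i is a times a vector depending only on k. *)
lemma elem_mat_image_cross:
  assumes i: "i < n" and i': "i' < n" and ii: "i \<noteq> i'" and k: "r \<le> k" "k < p" and j: "j < q"
  shows "b * F (elem_mat n p i k a) $$ (i,j) + a * F (elem_mat n p i' k b) $$ (i',j) = 0"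
proof -
  let ?M = "elem_mat n p i k a + elem_mat n p i' k b"
  have M: "?M \<in> S" using S_add elem_mat_in_S i i' k by blast
  have "b * F ?M $$ (i,j) + a * F ?M $$ (i',j) = 0"
  proof (rule row_relation_preserved[OF M i i' ii _ j], intro allI impI)
    fix k' assume "k' < p"
    then show "b * ?M $$ (i,k') + a * ?M $$ (i',k') = 0"
      using i i' ii two by (auto simp: algebra_simps)
  qed
  moreover have "F ?M $$ (i,j) = F (elem_mat n p i k a) $$ (i,j)"
    using F_add_entry[OF elem_mat_in_S elem_mat_in_S] elem_mat_image_other_rows i i' ii k j by simp
  moreover have "F ?M $$ (i',j) = F (elem_mat n p i' k b) $$ (i',j)"
    using F_add_entry[OF elem_mat_in_S elem_mat_in_S] elem_mat_image_other_rows i i' ii k j by simp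
  ultimately show ?thesis by simp
qed

lemma elem_mat_image_linear:
  assumes i: "i < n" and k: "r \<le> k" "k < p" and j: "j < q"
  shows "F (elem_mat n p i k a) $$ (i,j) = a * F (elem_mat n p 0 k 1) $$ (0,j)"
proof -
  have n2: "1 < n" using r2 rn by simp
  have gen: "F (elem_mat n p i k a) $$ (i,j) = a * F (elem_mat n p i' k 1) $$ (i',j)" if "i' < n" "i \<noteq> i'" for i'
    using elem_mat_image_cross[OF i that(1) that(2) k j, of 1 a] char2_add_eq_0 by simp
  show ?thesis
  proof (cases "i = 0")
    case False
    then show ?thesis using gen[of 0] n2 by simp
  next
    case True
    have "F (elem_mat n p 1 k 1) $$ (1,j) = 1 * F (elem_mat n p 0 k 1) $$ (0,j)"
      using elem_mat_image_cross[OF _ _ _ k j, of 1 0 1 1] n2 char2_add_eq_0 by simp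
    then show ?thesis using gen[of 1] n2 True by simp
  qed
qed

definition diag_img :: "nat \<Rightarrow> 'a \<Rightarrow> nat \<Rightarrow> 'a" where "diag_img i x c = F (elem_mat n p i i x) $$ (i,c)"
definition sym_img :: "nat \<Rightarrow> nat \<Rightarrow> nat \<Rightarrow> 'a" where "sym_img i j c = F (sym_elem_mat n p i j 1) $$ (i,c)"

lemma diag_img_add: "i < r \<Longrightarrow> c < q \<Longrightarrow> diag_img i (x + y) c = diag_img i x c + diag_img i y c"
  unfolding diag_img_def elem_mat_add using F_add_entry[OF diag_elem_mat_in_S diag_elem_mat_in_S] rn by simp

lemma sym_elem_image_add: "i < r \<Longrightarrow> j < r \<Longrightarrow> l < n \<Longrightarrow> c < q \<Longrightarrow>
   F (sym_elem_mat n p i j (x + y)) $$ (l,c) = F (sym_elem_mat n p i j x) $$ (l,c) + F (sym_elem_mat n p i j y) $$ (l,c)"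
  unfolding sym_elem_mat_add using F_add_entry[OF sym_elem_mat_in_S sym_elem_mat_in_S] by simp

(* The test matrix k l^2 E_ii + k l m (E_ij + E_ji) + k m^2 E_jj has rows i and j related by
   m (row i) + l (row j) = 0; transferring this relation to the image gives the functional
   equation of char2_pair_equation. *)
lemma sym_block_equation:
  assumes i: "i < r" and j: "j < r" and ij: "i \<noteq> j" and c: "c < q"
  shows "m * (diag_img i (k * l^2) c + F (sym_elem_mat n p i j (k * l * m)) $$ (i,c))
       + l * (F (sym_elem_mat n p i j (k * l * m)) $$ (j,c) + diag_img j (k * m^2) c) = 0"
proof -
  let ?E1 = "elem_mat n p i i (k * l^2)" and ?S = "sym_elem_mat n p i j (k * l * m)" and ?E2 = "elem_mat n p j j (k * m^2)"
  have E1: "?E1 \<in> S" and E2: "?E2 \<in> S" and Sx: "?S \<in> S" using diag_elem_mat_in_S sym_elem_mat_in_S i j by auto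
  have V: "?E1 + ?S + ?E2 \<in> S" using S_add E1 E2 Sx by blast
  have iN: "i < n" and jN: "j < n" using i j rn by auto
  have "m * F (?E1 + ?S + ?E2) $$ (i,c) + l * F (?E1 + ?S + ?E2) $$ (j,c) = 0"
  proof (rule row_relation_preserved[OF V iN jN ij _ c], intro allI impI)
    fix k' assume k': "k' < p"
    have "m * (k * l^2) + l * (k * l * m) = 2 * (k * l^2 * m)"
      by (simp add: power2_eq_square algebra_simps)
    moreover have "m * (k * l * m) + l * (k * m^2) = 2 * (k * l * m^2)"
      by (simp add: power2_eq_square algebra_simps)
    ultimately show "m * (?E1 + ?S + ?E2) $$ (i,k') + l * (?E1 + ?S + ?E2) $$ (j,k') = 0"
      using k' iN jN ij two rp by auto
  qed
  moreover have "F (?E1 + ?S + ?E2) $$ (i,c) = diag_img i (k * l^2) c + F ?S $$ (i,c)"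
    using F_add_entry[OF S_add[OF E1 Sx] E2 iN c] F_add_entry[OF E1 Sx iN c]
      diag_elem_image_other_rows[OF j iN ij c] unfolding diag_img_def by simp
  moreover have "F (?E1 + ?S + ?E2) $$ (j,c) = F ?S $$ (j,c) + diag_img j (k * m^2) c"
    using F_add_entry[OF S_add[OF E1 Sx] E2 jN c] F_add_entry[OF E1 Sx jN c]
      diag_elem_image_other_rows[OF i jN ij[symmetric] c] unfolding diag_img_def by simp
  ultimately show ?thesis by (simp add: algebra_simps)
qed

lemma sym_block_facts:
  assumes i: "i < r" and j: "j < r" and ij: "i \<noteq> j" and c: "c < q"
  shows "\<forall>b. F (sym_elem_mat n p i j b) $$ (i,c) = b * sym_img i j c"
    "\<forall>b. F (sym_elem_mat n p i j b) $$ (j,c) = b * sym_img j i c"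
    "\<forall>k l. diag_img i (k * l^2) c + k * l^2 * sym_img j i c = l * (diag_img i k c + k * sym_img j i c)"
    "\<forall>x. diag_img j x c + x * sym_img i j c = diag_img i x c + x * sym_img j i c"
proof -
  have iN: "i < n" and jN: "j < n" using i j rn by auto
  have sym_img_swap: "sym_img j i c = F (sym_elem_mat n p i j 1) $$ (j,c)" unfolding sym_img_def by (simp add: sym_elem_mat_swap)
  note pair_equation = char2_pair_equation[OF two, where f = "\<lambda>x. diag_img i x c" and g = "\<lambda>x. diag_img j x c"
      and \<alpha> = "\<lambda>b. F (sym_elem_mat n p i j b) $$ (i,c)" and \<beta> = "\<lambda>b. F (sym_elem_mat n p i j b) $$ (j,c)"]
  have fa: "\<forall>x y. diag_img i (x + y) c = diag_img i x c + diag_img i y c" using diag_img_add i c by blast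
  have ga: "\<forall>x y. diag_img j (x + y) c = diag_img j x c + diag_img j y c" using diag_img_add j c by blast
  have aa: "\<forall>x y. F (sym_elem_mat n p i j (x + y)) $$ (i,c) = F (sym_elem_mat n p i j x) $$ (i,c) + F (sym_elem_mat n p i j y) $$ (i,c)"
    using sym_elem_image_add i j iN c by blast
  have ba: "\<forall>x y. F (sym_elem_mat n p i j (x + y)) $$ (j,c) = F (sym_elem_mat n p i j x) $$ (j,c) + F (sym_elem_mat n p i j y) $$ (j,c)"
    using sym_elem_image_add i j jN c by blast
  have eq: "\<forall>k l m. m * (diag_img i (k * l^2) c + F (sym_elem_mat n p i j (k * l * m)) $$ (i,c))
       + l * (F (sym_elem_mat n p i j (k * l * m)) $$ (j,c) + diag_img j (k * m^2) c) = 0"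
    using sym_block_equation[OF i j ij c] by blast
  note pair = pair_equation[OF fa ga aa ba eq]
  show "\<forall>b. F (sym_elem_mat n p i j b) $$ (i,c) = b * sym_img i j c" using pair(1) unfolding sym_img_def .
  show "\<forall>b. F (sym_elem_mat n p i j b) $$ (j,c) = b * sym_img j i c" using pair(2) unfolding sym_img_swap .
  show "\<forall>k l. diag_img i (k * l^2) c + k * l^2 * sym_img j i c = l * (diag_img i k c + k * sym_img j i c)"
    using pair(3) unfolding sym_img_swap .
  show "\<forall>x. diag_img j x c + x * sym_img i j c = diag_img i x c + x * sym_img j i c" using pair(4) by (simp add: sym_img_swap sym_img_def[of i j c])
qed

(* With three distinct indices i, j, k < r, row i of F(E_ik + E_ki) does not depend on i: test
   E_ii + E_jj + E_kk + the three symmetric units, whose rows i and j coincide. *)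
lemma sym_img_row_independent:
  assumes i: "i < r" and j: "j < r" and k: "k < r" and ij: "i \<noteq> j" and ik: "i \<noteq> k" and jk: "j \<noteq> k"
    and c: "c < q"
  shows "sym_img i k c = sym_img j k c"
proof -
  let ?V = "elem_mat n p i i 1 + elem_mat n p j j 1 + elem_mat n p k k 1 + sym_elem_mat n p i j 1 + sym_elem_mat n p i k 1 + (sym_elem_mat n p j k 1 :: 'a mat)"
  have iN: "i < n" and jN: "j < n" and kN: "k < n" using i j k rn by auto
  have V: "?V \<in> S" using i j k by (simp add: S_add diag_elem_mat_in_S sym_elem_mat_in_S)
  have "1 * F ?V $$ (i,c) + 1 * F ?V $$ (j,c) = 0"
  proof (rule row_relation_preserved[OF V iN jN ij _ c], intro allI impI)
    fix k' assume k': "k' < p"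
    show "1 * ?V $$ (i,k') + 1 * ?V $$ (j,k') = 0"
      using k' iN jN kN ij ik jk two by auto
  qed
  moreover have "F ?V $$ (i,c) = diag_img i 1 c + sym_img i j c + sym_img i k c"
    using i j k iN c ij ik jk diag_elem_image_other_rows[OF j iN ij c] diag_elem_image_other_rows[OF k iN ik c]
      sym_elem_image_other_rows[OF j k iN ij ik c]
    by (simp add: S_add diag_elem_mat_in_S sym_elem_mat_in_S F_add_entry diag_img_def sym_img_def)
  moreover have "F ?V $$ (j,c) = diag_img j 1 c + sym_img j i c + sym_img j k c"
    using i j k jN c ij ik jk diag_elem_image_other_rows[OF i jN ij[symmetric] c] diag_elem_image_other_rows[OF k jN jk c]
      sym_elem_image_other_rows[OF i k jN ij[symmetric] jk c]
    by (simp add: S_add diag_elem_mat_in_S sym_elem_mat_in_S F_add_entry diag_img_def sym_img_def sym_elem_mat_swap[of n p i j])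
  ultimately have A: "(diag_img i 1 c + sym_img i j c + sym_img i k c) + (diag_img j 1 c + sym_img j i c + sym_img j k c) = 0" by simp
  have B: "(diag_img j 1 c + sym_img i j c) + (diag_img i 1 c + sym_img j i c) = 0"
  proof -
    have "diag_img j 1 c + 1 * sym_img i j c = diag_img i 1 c + 1 * sym_img j i c" using sym_block_facts(4)[OF i j ij c] by blast
    then show ?thesis by (simp only: char2_add_eq_0 mult_1)
  qed
  have "sym_img i k c + sym_img j k c = ((diag_img i 1 c + sym_img i j c + sym_img i k c) + (diag_img j 1 c + sym_img j i c + sym_img j k c))
      + ((diag_img j 1 c + sym_img i j c) + (diag_img i 1 c + sym_img j i c)) - 2 * (diag_img i 1 c + diag_img j 1 c + sym_img i j c + sym_img j i c)"
    by (simp add: algebra_simps)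
  then have "sym_img i k c + sym_img j k c = 0" using A B two by simp
  then show ?thesis using char2_add_eq_0 by simp
qed

(* The rows x_k of the matrix X: for k \<ge> r the image of E_0k, for k < r the row read off from
   any symmetric unit E_ik + E_ki (partner k is a fixed index i \<noteq> k).  rho is the part of the
   image of a E_ii not accounted for by a x_i. *)
definition partner :: "nat \<Rightarrow> nat" where "partner k = (if k = 0 then 1 else 0)"
definition xrow :: "nat \<Rightarrow> nat \<Rightarrow> 'a" where
  "xrow k c = (if k < r then sym_img (partner k) k c else F (elem_mat n p 0 k 1) $$ (0,c))"
definition rho :: "'a \<Rightarrow> nat \<Rightarrow> 'a" where "rho x c = diag_img 0 x c + x * xrow 0 c"

lemma partner_props: "k < r \<Longrightarrow> partner k < r \<and> partner k \<noteq> k" unfolding partner_def using r2 by auto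

lemma sym_img_eq_xrow: assumes a: "a < r" and k: "k < r" and ak: "a \<noteq> k" and c: "c < q"
  shows "sym_img a k c = xrow k c"
proof (cases "a = partner k")
  case True then show ?thesis unfolding xrow_def using k by simp
next
  case False
  then show ?thesis unfolding xrow_def using k sym_img_row_independent[OF a _ k False ak, of c] partner_props[OF k] c by auto
qed

lemma elem_mat_image: assumes i: "i < n" and k: "r \<le> k" "k < p" and l: "l < n" and c: "c < q"
  shows "F (elem_mat n p i k a) $$ (l,c) = (if l = i then a * xrow k c else 0)"
  using elem_mat_image_linear[OF i k c] elem_mat_image_other_rows[OF i k l _ c] k rp unfolding xrow_def by auto

lemma sym_elem_image: assumes i: "i < r" and j: "j < r" and ij: "i \<noteq> j" and l: "l < n" and c: "c < q"
  shows "F (sym_elem_mat n p i j b) $$ (l,c) = (if l = i then b * xrow j c else if l = j then b * xrow i c else 0)"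
  using sym_block_facts(1,2)[OF i j ij c] sym_elem_image_other_rows[OF i j l _ _ c] sym_img_eq_xrow[OF i j ij c]
    sym_img_eq_xrow[OF j i ij[symmetric] c] by auto

lemma diag_elem_image: assumes i: "i < r" and l: "l < n" and c: "c < q"
  shows "F (elem_mat n p i i a) $$ (l,c) = (if l = i then a * xrow i c + rho a c else 0)"
proof (cases "l = i")
  case False then show ?thesis using diag_elem_image_other_rows[OF i l False c] by simp
next
  case True
  have "diag_img i a c = a * xrow i c + rho a c"
  proof (cases "i = 0")
    case True
    have "a * xrow 0 c + a * xrow 0 c = 0" using char2_add_eq_0 by blast
    then show ?thesis unfolding rho_def True by (simp add: algebra_simps)
  next
    case False
    have r0: "0 < r" using r2 by simp
    have "diag_img i a c + a * sym_img 0 i c = diag_img 0 a c + a * sym_img i 0 c"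
      using sym_block_facts(4)[OF r0 i False[symmetric] c] by blast
    then have e: "diag_img i a c + a * xrow i c = diag_img 0 a c + a * xrow 0 c"
      using sym_img_eq_xrow[OF r0 i False[symmetric] c] sym_img_eq_xrow[OF i r0 False c] by simp
    have "diag_img i a c = (diag_img i a c + a * xrow i c) + a * xrow i c - 2 * (a * xrow i c)" by (simp add: algebra_simps)
    also have "\<dots> = (diag_img 0 a c + a * xrow 0 c) + a * xrow i c" using e two by simp
    finally show ?thesis unfolding rho_def by (simp add: algebra_simps)
  qed
  then show ?thesis using True unfolding diag_img_def by simp
qed

lemma rho_add: "c < q \<Longrightarrow> rho (x + y) c = rho x c + rho y c"
  unfolding rho_def using diag_img_add[of 0 c x y] r2 by (simp add: algebra_simps)

lemma rho_root: assumes c: "c < q" shows "rho (k * l^2) c = l * rho k c"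
proof -
  have r0: "0 < r" and r1: "1 < r" using r2 by auto
  have "diag_img 0 (k * l^2) c + k * l^2 * sym_img 1 0 c = l * (diag_img 0 k c + k * sym_img 1 0 c)"
    using sym_block_facts(3)[OF r0 r1 _ c] by simp
  moreover have "sym_img 1 0 c = xrow 0 c" using sym_img_eq_xrow[OF r1 r0 _ c] by simp
  ultimately show ?thesis unfolding rho_def by simp
qed

lemma rho_zero: "c < q \<Longrightarrow> rho 0 c = 0"
  using rho_add[of c 0 0] by (metis add_cancel_right_right add_0)

(* Decomposition of M \<in> S into elementary pieces indexed by the positions (i,k) with k \<ge> r or
   i \<le> k; restrict Z M keeps the pieces indexed by Z. *)
definition upper_pos :: "(nat \<times> nat) set" where
  "upper_pos = {(i,k). i < n \<and> k < p \<and> (r \<le> k \<or> i \<le> k)}"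

definition restrict :: "(nat \<times> nat) set \<Rightarrow> 'a mat \<Rightarrow> 'a mat" where
  "restrict Z M = mat n p (\<lambda>(i,k). if (i,k) \<in> Z \<or> (k < r \<and> (k,i) \<in> Z) then M $$ (i,k) else 0)"

definition piece :: "'a mat \<Rightarrow> nat \<times> nat \<Rightarrow> 'a mat" where
  "piece M z = (case z of (i,k) \<Rightarrow> if r \<le> k then elem_mat n p i k (M $$ (i,k))
      else if i = k then elem_mat n p i i (M $$ (i,i)) else sym_elem_mat n p i k (M $$ (i,k)))"

definition model :: "'a mat \<Rightarrow> 'a mat" where
  "model M = mat n q (\<lambda>(l,c). (\<Sum>k<p. M $$ (l,k) * xrow k c) + (if l < r then rho (M $$ (l,l)) c else 0))"

lemma finite_upper_pos: "finite upper_pos"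
proof -
  have "upper_pos \<subseteq> {..<n} \<times> {..<p}" unfolding upper_pos_def by auto
  then show ?thesis by (rule finite_subset) auto
qed

lemma restrict_in_S: assumes M: "M \<in> S" shows "restrict Z M \<in> S"
  using M rn rp unfolding sym_vee_set_def restrict_def by auto

lemma restrict_upper_pos: assumes M: "M \<in> S" shows "restrict upper_pos M = M"
proof (rule eq_matI)
  have Mc: "M \<in> carrier_mat n p" using M by (rule S_carrier)
  fix i k assume "i < dim_row M" "k < dim_col M"
  then have i: "i < n" and k: "k < p" using Mc by auto
  show "restrict upper_pos M $$ (i,k) = M $$ (i,k)"
    using i k M rn rp unfolding restrict_def upper_pos_def sym_vee_set_def by auto
qed (use S_carrier[OF M] in \<open>auto simp: restrict_def\<close>)

lemma restrict_empty: "restrict {} M = 0\<^sub>m n p"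
  unfolding restrict_def by (intro eq_matI) auto

lemma piece_dim[simp]: "dim_row (piece M z) = n" "dim_col (piece M z) = p"
  unfolding piece_def by (auto split: prod.splits)

lemma restrict_insert:
  assumes M: "M \<in> S" and Z: "Z \<subseteq> upper_pos" and z: "z \<in> upper_pos" and zZ: "z \<notin> Z"
  shows "restrict (insert z Z) M = restrict Z M + piece M z"
proof (rule eq_matI)
  obtain i0 k0 where z0: "z = (i0,k0)" by (cases z)
  fix i k assume "i < dim_row (restrict Z M + piece M z)" "k < dim_col (restrict Z M + piece M z)"
  then have i: "i < n" and k: "k < p" unfolding restrict_def by auto
  have i0: "i0 < n" and k0: "k0 < p" and up: "r \<le> k0 \<or> i0 \<le> k0" using z z0 unfolding upper_pos_def by auto
  have Msym: "\<forall>i<r. \<forall>j<r. M $$ (i,j) = M $$ (j,i)" and Mlow: "\<forall>i j. r \<le> i \<and> i < n \<and> j < r \<longrightarrow> M $$ (i,j) = 0"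
    using M unfolding sym_vee_set_def by auto
  have ZUP: "\<And>a b. (a,b) \<in> Z \<Longrightarrow> a < n \<and> b < p \<and> (r \<le> b \<or> a \<le> b)" using Z unfolding upper_pos_def by auto
  show "restrict (insert z Z) M $$ (i,k) = (restrict Z M + piece M z) $$ (i,k)"
  proof (cases "r \<le> k0")
    case True
    then show ?thesis using i k i0 k0 z0 zZ Mlow ZUP[of k i] ZUP[of i k] rn rp
      unfolding restrict_def piece_def by (auto)
  next
    case False
    then show ?thesis using i k i0 k0 z0 zZ Mlow Msym up ZUP[of k i] ZUP[of i k] rn rp
      unfolding restrict_def piece_def by (auto)
  qed
qed (auto simp: restrict_def piece_def split: prod.splits)

lemma piece_in_S: assumes z: "z \<in> upper_pos" shows "piece M z \<in> S"
  using z elem_mat_in_S diag_elem_mat_in_S sym_elem_mat_in_S rn unfolding upper_pos_def piece_def by (auto split: prod.splits)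

lemma model_add: assumes A: "A \<in> carrier_mat n p" and B: "B \<in> carrier_mat n p"
  shows "model (A + B) = model A + model B"
proof (rule eq_matI)
  fix l c assume "l < dim_row (model A + model B)" "c < dim_col (model A + model B)"
  then have l: "l < n" and c: "c < q" unfolding model_def by auto
  have "(\<Sum>k<p. (A + B) $$ (l,k) * xrow k c) = (\<Sum>k<p. A $$ (l,k) * xrow k c) + (\<Sum>k<p. B $$ (l,k) * xrow k c)"
  proof -
    have "(\<Sum>k<p. (A + B) $$ (l,k) * xrow k c) = (\<Sum>k<p. A $$ (l,k) * xrow k c + B $$ (l,k) * xrow k c)"
      using A B l by (intro sum.cong) (auto simp: distrib_right)
    then show ?thesis by (simp add: sum.distrib)
  qed
  moreover have "l < r \<Longrightarrow> rho ((A + B) $$ (l,l)) c = rho (A $$ (l,l)) c + rho (B $$ (l,l)) c"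
    using A B l c rp by (simp add: rho_add)
  ultimately show "model (A + B) $$ (l,c) = (model A + model B) $$ (l,c)"
    using l c unfolding model_def by auto
qed (auto simp: model_def)

lemma F_piece_eq_model: assumes z: "z \<in> upper_pos" shows "F (piece M z) = model (piece M z)"
proof (rule eq_matI)
  obtain i k where z0: "z = (i,k)" by (cases z)
  have i: "i < n" and k: "k < p" and up: "r \<le> k \<or> i \<le> k" using z z0 unfolding upper_pos_def by auto
  fix l c assume "l < dim_row (model (piece M z))" "c < dim_col (model (piece M z))"
  then have l: "l < n" and c: "c < q" unfolding model_def by auto
  show "F (piece M z) $$ (l,c) = model (piece M z) $$ (l,c)"
  proof (cases "r \<le> k")
    case True
    have "F (piece M z) $$ (l,c) = (if l = i then M $$ (i,k) * xrow k c else 0)"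
      using elem_mat_image[OF i True k l c] True z0 unfolding piece_def by simp
    moreover have "model (piece M z) $$ (l,c) = (if l = i then M $$ (i,k) * xrow k c else 0)"
      using True z0 l c k rho_zero[OF c] unfolding piece_def model_def
      by (auto simp: sum_if_eq_single)
    ultimately show ?thesis by simp
  next
    case False
    show ?thesis
    proof (cases "i = k")
      case True
      have ir: "i < r" using False True by simp
      have "F (piece M z) $$ (l,c) = (if l = i then M $$ (i,i) * xrow i c + rho (M $$ (i,i)) c else 0)"
        using diag_elem_image[OF ir l c] False True z0 unfolding piece_def by simp
      moreover have "model (piece M z) $$ (l,c) = (if l = i then M $$ (i,i) * xrow i c + rho (M $$ (i,i)) c else 0)"
        using False True z0 l c k ir rho_zero[OF c] rp unfolding piece_def model_def
        by (auto simp: sum_if_eq_single)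
      ultimately show ?thesis by simp
    next
      case ik: False
      have ir: "i < r" and kr: "k < r" using False up by auto
      have "F (piece M z) $$ (l,c) = (if l = i then M $$ (i,k) * xrow k c else if l = k then M $$ (i,k) * xrow i c else 0)"
        using sym_elem_image[OF ir kr ik l c] False ik z0 unfolding piece_def by simp
      moreover have "model (piece M z) $$ (l,c) = (if l = i then M $$ (i,k) * xrow k c else if l = k then M $$ (i,k) * xrow i c else 0)"
        using False ik z0 l c k ir kr rho_zero[OF c] rp unfolding piece_def model_def
        by (auto simp: sum_if_eq_single)
      ultimately show ?thesis by simp
    qed
  qed
qed (use Fc piece_in_S[OF z] in \<open>auto simp: model_def\<close>)

lemma F_eq_model: assumes M: "M \<in> S" shows "F M = model M"
proof -
  have "F (restrict Z M) = model (restrict Z M)" if "Z \<subseteq> upper_pos" for Z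
  proof -
    have fin: "finite Z" using that finite_upper_pos finite_subset by blast
    show ?thesis using fin that
    proof (induction Z rule: finite_induct)
      case empty
      have "F (0\<^sub>m n p) = model (0\<^sub>m n p)"
        unfolding F_zero using rp by (intro eq_matI) (auto simp: model_def rho_zero)
      then show ?case by (simp add: restrict_empty)
    next
      case (insert z Z)
      have zU: "z \<in> upper_pos" and ZU: "Z \<subseteq> upper_pos" using insert.prems by auto
      have "F (restrict (insert z Z) M) = F (restrict Z M + piece M z)" using restrict_insert[OF M ZU zU insert.hyps(2)] by simp
      also have "\<dots> = F (restrict Z M) + F (piece M z)" using Fadd restrict_in_S[OF M] piece_in_S[OF zU] by blast
      also have "\<dots> = model (restrict Z M) + model (piece M z)" using insert.IH[OF ZU] F_piece_eq_model[OF zU] by simp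
      also have "\<dots> = model (restrict Z M + piece M z)"
        using model_add[OF S_carrier[OF restrict_in_S[OF M]] S_carrier[OF piece_in_S[OF zU]]] by simp
      also have "\<dots> = model (restrict (insert z Z) M)" using restrict_insert[OF M ZU zU insert.hyps(2)] by simp
      finally show ?case .
    qed
  qed
  from this[of upper_pos] show ?thesis using restrict_upper_pos[OF M] by simp
qed

(* The test matrix for the independence statements: row l is c with a placed on the diagonal,
   column l of the upper-left block repeats c (so the matrix lies in S), all else is zero. *)
definition test_mat :: "(nat \<Rightarrow> 'a) \<Rightarrow> 'a \<Rightarrow> nat \<Rightarrow> 'a mat" where
  "test_mat c a l = mat n p (\<lambda>(i,k). if k < r then (if i < r then (if k = l then c i else 0) + (if i = l then c k else 0)
       + (if i = l \<and> k = l then a else 0) else 0) else (if i = l then c k else 0))"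

lemma test_mat_in_S: "l < r \<Longrightarrow> test_mat c a l \<in> S"
  using rn rp unfolding test_mat_def sym_vee_set_def by (auto simp: add_ac)

lemma test_mat_row_l: "l < r \<Longrightarrow> k < p \<Longrightarrow> test_mat c a l $$ (l,k) = c k + (if k = l then c l + a else 0)"
  unfolding test_mat_def using rn by auto

lemma test_mat_row_k0: "l < r \<Longrightarrow> k0 < r \<Longrightarrow> k0 \<noteq> l \<Longrightarrow> k < p \<Longrightarrow> test_mat c a l $$ (k0,k) = (if k = l then c k0 else 0)"
  unfolding test_mat_def using rn by auto

lemma model_test_mat_row_l:
  assumes l: "l < r" and j: "j < q"
  shows "model (test_mat c a l) $$ (l,j) = (\<Sum>k<p. c k * xrow k j) + (c l + a) * xrow l j + rho a j"
proof -
  have lN: "l < n" and lp: "l < p" using l rn rp by auto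
  have "(\<Sum>k<p. test_mat c a l $$ (l,k) * xrow k j) = (\<Sum>k<p. c k * xrow k j + (if k = l then c l + a else 0) * xrow k j)"
    using test_mat_row_l[OF l] by (intro sum.cong) (auto simp: distrib_right)
  also have "\<dots> = (\<Sum>k<p. c k * xrow k j) + (c l + a) * xrow l j"
    using lp by (simp add: sum.distrib sum_if_eq_single)
  finally have s: "(\<Sum>k<p. test_mat c a l $$ (l,k) * xrow k j) = (\<Sum>k<p. c k * xrow k j) + (c l + a) * xrow l j" .
  have "test_mat c a l $$ (l,l) = a" using test_mat_row_l[OF l lp] two by simp
  then show ?thesis unfolding model_def using s lN j l by simp
qed

lemma model_test_mat_row_k0:
  assumes l: "l < r" and k0: "k0 < r" and kl: "k0 \<noteq> l" and j: "j < q"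
  shows "model (test_mat c a l) $$ (k0,j) = c k0 * xrow l j"
proof -
  have k0N: "k0 < n" and lp: "l < p" using l k0 rn rp by auto
  have "(\<Sum>k<p. test_mat c a l $$ (k0,k) * xrow k j) = (\<Sum>k<p. (if k = l then c k0 else 0) * xrow k j)"
    using test_mat_row_k0[OF l k0 kl] by (intro sum.cong) auto
  also have "\<dots> = c k0 * xrow l j" using lp by (simp add: sum_if_eq_single)
  finally have s: "(\<Sum>k<p. test_mat c a l $$ (k0,k) * xrow k j) = c k0 * xrow l j" .
  have "test_mat c a l $$ (k0,k0) = 0" using test_mat_row_k0[OF l k0 kl] k0 rp kl by simp
  then show ?thesis unfolding model_def using s k0N j k0 rho_zero[OF j] by simp
qed

(* If c X + rho(a) = 0 and c_l + t c_k0 = a (l \<noteq> k0 < r), then row l + t row k0 of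
   F(test_mat c a l) vanishes; by range preservation the same combination of rows of the test
   matrix, which is c itself, vanishes. *)
lemma test_mat_forces_zero:
  assumes l: "l < r" and k0: "k0 < r" and kl: "k0 \<noteq> l" and ca: "c l + t * c k0 = a"
    and z: "\<forall>j<q. (\<Sum>k<p. c k * xrow k j) + rho a j = 0"
  shows "\<forall>k<p. c k = 0"
proof (intro allI impI)
  fix k assume k: "k < p"
  have lN: "l < n" and k0N: "k0 < n" using l k0 rn by auto
  have M: "test_mat c a l \<in> S" by (rule test_mat_in_S[OF l])
  have "(c l + t * c k0) + a = 0" using ca char2_add_eq_0 by blast
  then have aa: "c l + a + t * c k0 = 0" by (simp add: add_ac)
  have "1 * F (test_mat c a l) $$ (l, j) + t * F (test_mat c a l) $$ (k0, j) = 0" if j: "j < q" for j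
  proof -
    have "1 * model (test_mat c a l) $$ (l,j) + t * model (test_mat c a l) $$ (k0,j)
        = ((\<Sum>k<p. c k * xrow k j) + rho a j) + (c l + a + t * c k0) * xrow l j"
      unfolding model_test_mat_row_l[OF l j] model_test_mat_row_k0[OF l k0 kl j] by (simp add: algebra_simps)
    also have "\<dots> = 0" using z j aa by simp
    finally show ?thesis using F_eq_model[OF M] by simp
  qed
  then have "1 * test_mat c a l $$ (l,k) + t * test_mat c a l $$ (k0,k) = 0"
    using source_annihilator[OF M, of "\<lambda>i. if i = l then 1 else if i = k0 then t else 0", OF _ k]
    unfolding sum_two_points[OF lN k0N kl[symmetric]] by blast
  moreover have "test_mat c a l $$ (l,k) + t * test_mat c a l $$ (k0,k) = c k"
    using test_mat_row_l[OF l k] test_mat_row_k0[OF l k0 kl k] aa by (auto simp: algebra_simps)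
  ultimately show "c k = 0" by simp
qed

lemma xrow_indep_mod_rho:
  assumes z: "\<forall>j<q. (\<Sum>k<p. c k * xrow k j) + rho a j = 0" and k0: "k0 < r"
  shows "c k0 = 0"
proof (rule ccontr)
  assume ne: "c k0 \<noteq> 0"
  define l where "l = partner k0"
  have l: "l < r" and kl: "k0 \<noteq> l" using partner_props[OF k0] unfolding l_def by auto
  define t where "t = (a - c l) / c k0"
  have "c l + t * c k0 = a" unfolding t_def using ne by simp
  then have "\<forall>k<p. c k = 0" using test_mat_forces_zero[OF l k0 kl _ z] by blast
  then show False using ne k0 rp by auto
qed

lemma xrow_indep:
  assumes z: "\<forall>j<q. (\<Sum>k<p. c k * xrow k j) = 0"
  shows "\<forall>k<p. c k = 0"
proof -
  have z': "\<forall>j<q. (\<Sum>k<p. c k * xrow k j) + rho 0 j = 0" using z rho_zero by simp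
  have c0: "c 0 = 0" using xrow_indep_mod_rho[OF z', of 0] r2 by simp
  have r0: "0 < r" and r1: "1 < r" using r2 by auto
  show ?thesis using test_mat_forces_zero[OF r0 r1 _ _ z', of 0] c0 by simp
qed

end

context vec_space begin

lemma extend_indpt:
  assumes ST: "S \<subseteq> T" and T: "T \<subseteq> carrier_vec n" and S: "lin_indpt S"
  shows "\<exists>J. S \<subseteq> J \<and> J \<subseteq> T \<and> lin_indpt J \<and> finite J \<and> T \<subseteq> span J"
proof -
  let ?P = "\<lambda>B. S \<subseteq> B \<and> B \<subseteq> T \<and> lin_indpt B"
  have bnd: "finite B \<and> card B \<le> n" if "?P B" for B
    using li_le_dim[of B] that T by (auto simp: dim_is_n)
  obtain J where J: "finite J" "maximal J ?P"
    using maximal_exists[of ?P n S, OF bnd] ST S by blast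
  have PJ: "?P J" using J(2) unfolding maximal_def by blast
  have "T \<subseteq> span J"
  proof
    fix u assume u: "u \<in> T"
    show "u \<in> span J"
    proof (rule ccontr)
      assume nu: "u \<notin> span J"
      have JC: "J \<subseteq> carrier_vec n" using PJ T by auto
      have uJ: "u \<notin> J" using nu span_mem[OF JC] by blast
      have "lin_indpt (J \<union> {u})"
        using lin_dep_iff_in_span[OF JC _ _ uJ] PJ nu u T by auto
      then have "?P (J \<union> {u})" using PJ u by auto
      then have "J \<union> {u} = J" using J(2) unfolding maximal_def by blast
      then show False using uJ by auto
    qed
  qed
  then show ?thesis using PJ J(1) by blast
qed

lemma lincomb_list_rep:
  assumes d: "distinct L" and LC: "set L \<subseteq> carrier_vec n" and A: "A \<subseteq> set L" and j: "j < n"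
  shows "lincomb a A $ j = (\<Sum>l<length L. (if L ! l \<in> A then a (L ! l) else 0) * L ! l $ j)"
proof -
  have AC: "A \<subseteq> carrier_vec n" using A LC by auto
  have "lincomb a A $ j = (\<Sum>x\<in>A. a x * x $ j)" by (rule lincomb_index[OF j AC])
  also have "\<dots> = (\<Sum>l\<in>{l. l < length L \<and> L ! l \<in> A}. a (L ! l) * L ! l $ j)"
  proof (rule sum.reindex_bij_betw[symmetric])
    show "bij_betw (\<lambda>l. L ! l) {l. l < length L \<and> L ! l \<in> A} A"
    proof (rule bij_betwI')
      show "\<And>x y. x \<in> {l. l < length L \<and> L ! l \<in> A} \<Longrightarrow> y \<in> {l. l < length L \<and> L ! l \<in> A} \<Longrightarrow> (L ! x = L ! y) = (x = y)"
        using d by (auto simp: nth_eq_iff_index_eq)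
      show "\<And>x. x \<in> {l. l < length L \<and> L ! l \<in> A} \<Longrightarrow> L ! x \<in> A" by auto
      show "\<And>y. y \<in> A \<Longrightarrow> \<exists>x\<in>{l. l < length L \<and> L ! l \<in> A}. y = L ! x"
        using A by (force simp: in_set_conv_nth)
    qed
  qed
  also have "\<dots> = (\<Sum>l<length L. (if L ! l \<in> A then a (L ! l) else 0) * L ! l $ j)"
  proof -
    have "(\<Sum>l<length L. (if L ! l \<in> A then a (L ! l) else 0) * L ! l $ j)
        = (\<Sum>l\<in>{..<length L} \<inter> {l. L ! l \<in> A}. a (L ! l) * L ! l $ j)"
    proof -
      have "(\<Sum>l<length L. (if L ! l \<in> A then a (L ! l) else 0) * L ! l $ j)
          = (\<Sum>l<length L. if L ! l \<in> A then a (L ! l) * L ! l $ j else 0)"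
        by (intro sum.cong) auto
      then show ?thesis by (simp add: sum.inter_restrict)
    qed
    also have "{..<length L} \<inter> {l. L ! l \<in> A} = {l. l < length L \<and> L ! l \<in> A}" by auto
    finally show ?thesis by simp
  qed
  finally show ?thesis .
qed

lemma span_list_coords:
  assumes d: "distinct L" and LC: "set L \<subseteq> carrier_vec n" and A: "A \<subseteq> set L" and v: "v \<in> span A"
  shows "\<exists>c. (\<forall>l. L ! l \<notin> A \<longrightarrow> c l = 0) \<and> (\<forall>j<n. v $ j = (\<Sum>l<length L. c l * L ! l $ j))"
proof -
  obtain B a where B: "finite B" "B \<subseteq> A" "v = lincomb a B"
    using v unfolding span_def by auto
  define c where "c l = (if L ! l \<in> B then a (L ! l) else 0)" for l
  have "\<forall>l. L ! l \<notin> A \<longrightarrow> c l = 0" using B(2) unfolding c_def by auto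
  moreover have "\<forall>j<n. v $ j = (\<Sum>l<length L. c l * L ! l $ j)"
    using lincomb_list_rep[OF d LC] B A unfolding c_def by auto
  ultimately show ?thesis by blast
qed

lemma mat_of_rows_spanning_invertible:
  assumes d: "distinct L" and LC: "set L \<subseteq> carrier_vec n" and len: "length L = n"
    and sp: "carrier_vec n \<subseteq> span (set L)"
  shows "invertible_mat (mat_of_rows n L)"
proof -
  define Q where "Q = mat_of_rows n L"
  have Qc: "Q \<in> carrier_mat n n" unfolding Q_def using len by (metis mat_of_rows_carrier(1))
  have Qidx: "Q $$ (l,j) = L ! l $ j" if "l < n" "j < n" for l j
    unfolding Q_def using that len by (simp add: mat_of_rows_index)
  have "\<exists>c. \<forall>m<n. unit_vec n j $ m = (\<Sum>l<n. c l * Q $$ (l,m))" if j: "j < n" for j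
  proof -
    have "unit_vec n j \<in> span (set L)" using sp j by auto
    then obtain c where "\<forall>m<n. unit_vec n j $ m = (\<Sum>l<length L. c l * L ! l $ m)"
      using span_list_coords[OF d LC subset_refl] by blast
    then show ?thesis using len Qidx by (intro exI[of _ c]) auto
  qed
  then obtain D where D: "\<And>j m. j < n \<Longrightarrow> m < n \<Longrightarrow> unit_vec n j $ m = (\<Sum>l<n. D j l * Q $$ (l,m))"
    by metis
  define C where "C = mat n n (\<lambda>(j,l). D j l)"
  have Cc: "C \<in> carrier_mat n n" unfolding C_def by auto
  have CQ: "C * Q = 1\<^sub>m n"
  proof (rule eq_matI)
    fix j m assume "j < dim_row (1\<^sub>m n :: 'a mat)" "m < dim_col (1\<^sub>m n :: 'a mat)"
    then have j: "j < n" and m: "m < n" by auto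
    have "(C * Q) $$ (j,m) = (\<Sum>l<n. D j l * Q $$ (l,m))"
      using j m Qc unfolding C_def by (simp add: scalar_prod_def lessThan_atLeast0)
    also have "\<dots> = unit_vec n j $ m" using D[OF j m] by simp
    finally show "(C * Q) $$ (j,m) = 1\<^sub>m n $$ (j,m)" using j m by auto
  qed (use Qc in \<open>auto simp: C_def\<close>)
  have QC: "Q * C = 1\<^sub>m n" by (rule mat_mult_left_right_inverse[OF Cc Qc CQ])
  show ?thesis
    unfolding Q_def[symmetric] invertible_mat_def inverts_mat_def
    using Qc Cc QC CQ by (auto intro!: exI[of _ C])
qed

end

(* Note that image Rv is a subspace, since
   l Rv(a) = Rv(l^2 a). *)
locale row_completion = vec_space f_ty q for f_ty :: "'a::field itself" and q :: nat +
  fixes p r :: nat and xs :: "nat \<Rightarrow> nat \<Rightarrow> 'a" and Rv :: "'a \<Rightarrow> nat \<Rightarrow> 'a"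
  assumes rp: "r \<le> p"
    and Radd: "\<And>x y j. j < q \<Longrightarrow> Rv (x + y) j = Rv x j + Rv y j"
    and Rroot: "\<And>l x j. j < q \<Longrightarrow> Rv (l^2 * x) j = l * Rv x j"
    and indep_mod: "\<And>c a. \<forall>j<q. (\<Sum>k<p. c k * xs k j) + Rv a j = 0 \<Longrightarrow> \<forall>k<r. c k = 0"
    and indep: "\<And>c. \<forall>j<q. (\<Sum>k<p. c k * xs k j) = 0 \<Longrightarrow> \<forall>k<p. c k = 0"
begin

definition xv :: "nat \<Rightarrow> 'a vec" where "xv k = vec q (xs k)"
definition Xs :: "'a vec set" where "Xs = xv ` {..<p}"
definition X0 :: "'a vec set" where "X0 = xv ` {..<r}"
definition Xr :: "'a vec set" where "Xr = xv ` {r..<p}"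
definition W :: "'a vec set" where "W = range (\<lambda>a. vec q (Rv a))"
definition xlist :: "'a vec list" where "xlist = map xv [0..<p]"

lemma Rv_zero: "j < q \<Longrightarrow> Rv 0 j = 0"
  using Radd[of j 0 0] by (metis add_cancel_right_right add_0)

lemma xv_carrier: "xv k \<in> carrier_vec q" unfolding xv_def by auto
lemma Xs_carrier: "Xs \<subseteq> carrier_vec q" unfolding Xs_def using xv_carrier by auto
lemma W_carrier: "W \<subseteq> carrier_vec q" unfolding W_def by auto
lemma Xs_split: "Xs = X0 \<union> Xr" and X0_sub: "X0 \<subseteq> Xs" and Xr_sub: "Xr \<subseteq> Xs"
  using rp unfolding Xs_def X0_def Xr_def by (auto simp: image_Un[symmetric] ivl_disj_un)

lemma xv_inj: "inj_on xv {..<p}"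
proof (rule inj_onI)
  fix a b assume a: "a \<in> {..<p}" and b: "b \<in> {..<p}" and e: "xv a = xv b"
  show "a = b"
  proof (rule ccontr)
    assume ab: "a \<noteq> b"
    define c where "c k = (if k = a then 1 else if k = b then -1 else (0::'a))" for k
    have "\<forall>j<q. (\<Sum>k<p. c k * xs k j) = 0"
    proof (intro allI impI)
      fix j assume j: "j < q"
      have "xs a j = xs b j" using arg_cong[OF e, of "\<lambda>v. v $ j"] j unfolding xv_def by simp
      moreover have "(\<Sum>k<p. c k * xs k j) = 1 * xs a j + (-1) * xs b j"
        unfolding c_def by (rule sum_two_points) (use a b ab in auto)
      ultimately show "(\<Sum>k<p. c k * xs k j) = 0" by simp
    qed
    then have "c a = 0" using indep a by blast
    then show False unfolding c_def by simp
  qed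
qed

lemma xlist_distinct: "distinct xlist"
  unfolding xlist_def using xv_inj by (simp add: distinct_map atLeast0LessThan)

lemma xlist_set: "set xlist = Xs" unfolding xlist_def Xs_def by auto

lemma xlist_nth: "k < p \<Longrightarrow> xlist ! k = xv k" unfolding xlist_def by simp

lemma lincomb_Xs:
  assumes "A \<subseteq> Xs" "j < q"
  shows "lincomb a A $ j = (\<Sum>k<p. (if xv k \<in> A then a (xv k) else 0) * xs k j)"
proof -
  have "lincomb a A $ j = (\<Sum>k<length xlist. (if xlist ! k \<in> A then a (xlist ! k) else 0) * xlist ! k $ j)"
    by (rule lincomb_list_rep[OF xlist_distinct]) (use xlist_set Xs_carrier assms in auto)
  also have "\<dots> = (\<Sum>k<p. (if xv k \<in> A then a (xv k) else 0) * xs k j)"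
    unfolding xlist_def using assms(2) by (intro sum.cong) (auto simp: xv_def)
  finally show ?thesis .
qed

lemma Xs_lin_indpt: "lin_indpt Xs"
proof
  assume "lin_dep Xs"
  then obtain A a v where A: "finite A" "A \<subseteq> Xs" "lincomb a A = 0\<^sub>v q" "v \<in> A" "a v \<noteq> 0"
    unfolding lin_dep_def by auto
  define c where "c k = (if xv k \<in> A then a (xv k) else 0)" for k
  have "\<forall>j<q. (\<Sum>k<p. c k * xs k j) = 0"
    using lincomb_Xs[OF A(2)] A(3) unfolding c_def by (metis index_zero_vec(1))
  then have c0: "\<forall>k<p. c k = 0" by (rule indep)
  obtain k where k: "k < p" "v = xv k" using A(2,4) unfolding Xs_def by auto
  then show False using c0 A(4,5) unfolding c_def by auto
qed

definition W_pre :: "'a vec \<Rightarrow> 'a" where "W_pre w = (SOME a. w = vec q (Rv a))"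

lemma W_pre: "w \<in> W \<Longrightarrow> w = vec q (Rv (W_pre w))"
  unfolding W_def W_pre_def by (auto intro: someI)

(* W is closed under linear combinations: a_w w = Rv(a_w^2 pre(w)). *)
lemma lincomb_W:
  assumes A: "finite A" "A \<subseteq> W" and j: "j < q"
  shows "(\<Sum>w\<in>A. a w * w $ j) = Rv (\<Sum>w\<in>A. (a w)^2 * W_pre w) j"
proof -
  have "(\<Sum>w\<in>A. a w * w $ j) = (\<Sum>w\<in>A. Rv ((a w)^2 * W_pre w) j)"
  proof (rule sum.cong[OF refl])
    fix w assume "w \<in> A"
    then have "w $ j = Rv (W_pre w) j" using W_pre[of w] A j by (metis index_vec subsetD)
    then show "a w * w $ j = Rv ((a w)^2 * W_pre w) j" using Rroot[OF j] by simp
  qed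
  also have "\<dots> = Rv (\<Sum>w\<in>A. (a w)^2 * W_pre w) j"
    using A(1)
  proof (induction A rule: finite_induct)
    case empty
    show ?case using Rv_zero[OF j] by simp
  next
    case (insert w A)
    then show ?case by (simp add: Radd[OF j])
  qed
  finally show ?thesis .
qed

lemma xv_not_in_W: assumes l: "l < r" shows "xv l \<notin> W"
proof
  assume "xv l \<in> W"
  then have e: "xv l = vec q (Rv (W_pre (xv l)))" using W_pre by blast
  define c where "c k = (if k = l then 1 else (0::'a))" for k
  have "\<forall>j<q. (\<Sum>k<p. c k * xs k j) + Rv (- W_pre (xv l)) j = 0"
  proof (intro allI impI)
    fix j assume j: "j < q"
    have "(\<Sum>k<p. c k * xs k j) = xs l j"
      unfolding c_def using l rp sum_if_eq_single[where p=p and k=l and a=1 and g="\<lambda>k. xs k j"] by simp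
    also have "\<dots> = Rv (W_pre (xv l)) j" using arg_cong[OF e, of "\<lambda>v. v $ j"] j unfolding xv_def by simp
    moreover have "Rv (W_pre (xv l)) j + Rv (- W_pre (xv l)) j = 0"
      using Radd[OF j, of "W_pre (xv l)" "- W_pre (xv l)"] Rv_zero[OF j] by simp
    ultimately show "(\<Sum>k<p. c k * xs k j) + Rv (- W_pre (xv l)) j = 0" by simp
  qed
  then have "c l = 0" using indep_mod l by blast
  then show False unfolding c_def by simp
qed

(* If J is an independent set with Xr \<subseteq> J \<subseteq> Xr \<union> W, then X0 \<union> J is independent: in a
   dependency the W-part is some Rv(sigma) and the Xs-part is a combination of the x_k, so
   condition (I) kills the X0-coefficients and independence of J the rest. *)
lemma X0_J_lin_indpt:
  assumes J: "Xr \<subseteq> J" "J \<subseteq> Xr \<union> W" "lin_indpt J"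
  shows "lin_indpt (X0 \<union> J)"
proof
  assume "lin_dep (X0 \<union> J)"
  then obtain A a v where A: "finite A" "A \<subseteq> X0 \<union> J" "lincomb a A = 0\<^sub>v q" "v \<in> A" "a v \<noteq> 0"
    unfolding lin_dep_def by auto
  define A0 where "A0 = A \<inter> X0"
  define A1 where "A1 = A - X0"
  define AX where "AX = A \<inter> Xs"
  define AW where "AW = A - Xs"
  have AC: "A \<subseteq> carrier_vec q" using A(2) J(2) Xs_carrier W_carrier X0_sub Xr_sub by blast
  have fin: "finite A0" "finite A1" "finite AX" "finite AW"
    using A(1) unfolding A0_def A1_def AX_def AW_def by auto
  have AWW: "AW \<subseteq> W" using A(2) J(2) Xs_split unfolding AW_def by auto
  have sumA: "(\<Sum>x\<in>A. a x * x $ j) = 0" if j: "j < q" for j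
    using lincomb_index[OF j AC, of a] A(3) j by simp
  define c where "c k = (if xv k \<in> AX then a (xv k) else 0)" for k
  have "\<forall>j<q. (\<Sum>k<p. c k * xs k j) + Rv (\<Sum>w\<in>AW. (a w)^2 * W_pre w) j = 0"
  proof (intro allI impI)
    fix j assume j: "j < q"
    have "A = AX \<union> AW" "AX \<inter> AW = {}" unfolding AX_def AW_def by auto
    then have "(\<Sum>x\<in>A. a x * x $ j) = (\<Sum>x\<in>AX. a x * x $ j) + (\<Sum>x\<in>AW. a x * x $ j)"
      using fin by (simp add: sum.union_disjoint)
    moreover have "AX \<subseteq> carrier_vec q" using AC unfolding AX_def by auto
    then have "(\<Sum>x\<in>AX. a x * x $ j) = lincomb a AX $ j"
      using lincomb_index[OF j] by simp
    moreover have "lincomb a AX $ j = (\<Sum>k<p. c k * xs k j)"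
      unfolding c_def by (rule lincomb_Xs) (use j in \<open>auto simp: AX_def\<close>)
    ultimately show "(\<Sum>k<p. c k * xs k j) + Rv (\<Sum>w\<in>AW. (a w)^2 * W_pre w) j = 0"
      using sumA[OF j] lincomb_W[OF fin(4) AWW j] by simp
  qed
  then have c0: "\<forall>k<r. c k = 0" by (rule indep_mod)
  have a0: "a x = 0" if x: "x \<in> A0" for x
  proof -
    obtain k where k: "k < r" "x = xv k" using x unfolding A0_def X0_def by auto
    then have "x \<in> AX" using x X0_sub unfolding A0_def AX_def by auto
    then show ?thesis using c0 k unfolding c_def by auto
  qed
  have lc1: "lincomb a A1 = 0\<^sub>v q"
  proof (rule eq_vecI)
    have A1C: "A1 \<subseteq> carrier_vec q" using AC unfolding A1_def by auto
    show "dim_vec (lincomb a A1) = dim_vec (0\<^sub>v q)" using lincomb_dim[OF fin(2) A1C] by simp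
    fix j assume "j < dim_vec (0\<^sub>v q)"
    then have j: "j < q" by simp
    have "A = A0 \<union> A1" "A0 \<inter> A1 = {}" unfolding A0_def A1_def by auto
    then have "(\<Sum>x\<in>A. a x * x $ j) = (\<Sum>x\<in>A0. a x * x $ j) + (\<Sum>x\<in>A1. a x * x $ j)"
      using fin by (simp add: sum.union_disjoint)
    then have "(\<Sum>x\<in>A1. a x * x $ j) = 0" using sumA[OF j] a0 by simp
    then show "lincomb a A1 $ j = 0\<^sub>v q $ j" using lincomb_index[OF j A1C] j by simp
  qed
  have A1J: "A1 \<subseteq> J" using A(2) unfolding A1_def by auto
  have a1: "a x = 0" if x: "x \<in> A1" for x
  proof (rule ccontr)
    assume "a x \<noteq> 0"
    then have "lin_dep J" unfolding lin_dep_def using fin(2) lc1 x A1J by blast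
    then show False using J(3) by simp
  qed
  show False using A(4,5) a0 a1 unfolding A0_def A1_def by auto
qed

(* Basis completion: a basis B of K^q containing Xs in which every Rv(a) is a combination of
   B - X0.  First complete Xr inside Xr \<union> W, then add X0 and complete to all of K^q. *)
lemma basis_completion:
  "\<exists>B. Xs \<subseteq> B \<and> B \<subseteq> carrier_vec q \<and> finite B \<and> card B = q \<and> carrier_vec q \<subseteq> span B \<and>
       (\<forall>a. vec q (Rv a) \<in> span (B - X0))"
proof -
  have indXr: "lin_indpt Xr" using subset_li_is_li[OF Xs_lin_indpt Xr_sub] .
  obtain J where J: "Xr \<subseteq> J" "J \<subseteq> Xr \<union> W" "lin_indpt J" "finite J" "Xr \<union> W \<subseteq> span J"
    using extend_indpt[OF _ _ indXr, of "Xr \<union> W"] Xr_sub Xs_carrier W_carrier by blast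
  have JC: "J \<subseteq> carrier_vec q" using J(2) Xr_sub Xs_carrier W_carrier by blast
  have X0J: "X0 \<inter> J = {}"
  proof -
    have "xv l \<notin> J" if l: "l < r" for l
    proof
      assume "xv l \<in> J"
      moreover have "xv l \<notin> Xr"
      proof
        assume "xv l \<in> Xr"
        then obtain k where k: "k \<in> {r..<p}" "xv l = xv k" unfolding Xr_def by auto
        then have "l = k" using l rp by (intro inj_onD[OF xv_inj]) auto
        then show False using k l by auto
      qed
      ultimately show False using J(2) xv_not_in_W[OF l] by auto
    qed
    then show ?thesis unfolding X0_def by auto
  qed
  have X0JC: "X0 \<union> J \<subseteq> carrier_vec q" using X0_sub Xs_carrier JC by auto
  obtain B where B: "X0 \<union> J \<subseteq> B" "B \<subseteq> carrier_vec q" "lin_indpt B" "finite B" "carrier_vec q \<subseteq> span B"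
    using extend_indpt[OF X0JC _ X0_J_lin_indpt[OF J(1-3)]] by blast
  have "card B = q"
  proof -
    have "card B \<le> q" using li_le_dim(2)[OF _ B(2,3)] dim_is_n by simp
    moreover have "span B = carrier_vec q" using B(5) span_is_subset2[OF B(2)] by auto
    then have "card B \<ge> q" using gen_ge_dim[OF B(4,2)] dim_is_n by simp
    ultimately show ?thesis by simp
  qed
  moreover have "Xs \<subseteq> B" using B(1) J(1) Xs_split by auto
  moreover have "vec q (Rv a) \<in> span (B - X0)" for a
  proof -
    have "vec q (Rv a) \<in> span J" using J(5) unfolding W_def by auto
    moreover have "J \<subseteq> B - X0" using B(1) X0J by auto
    ultimately show ?thesis using span_is_monotone by blast
  qed
  ultimately show ?thesis using B by blast
qed

lemma completion_matrix:
  "p \<le> q \<and> (\<exists>Q \<in> carrier_mat q q. invertible_mat Q \<and> (\<forall>k<p. \<forall>j<q. Q $$ (k,j) = xs k j) \<and>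
     (\<forall>a. \<exists>d. (\<forall>l<r. d l = 0) \<and> (\<forall>j<q. Rv a j = (\<Sum>l<q. d l * Q $$ (l,j)))))"
proof -
  obtain B where B: "Xs \<subseteq> B" "B \<subseteq> carrier_vec q" "finite B" "card B = q" "carrier_vec q \<subseteq> span B"
    and BR: "\<forall>a. vec q (Rv a) \<in> span (B - X0)"
    using basis_completion by blast
  have pq: "p \<le> q"
    using card_mono[OF B(3,1)] B(4) card_image[OF xv_inj] unfolding Xs_def by simp
  obtain L2 where L2: "distinct L2" "set L2 = B - Xs" using finite_distinct_list[of "B - Xs"] B(3) by auto
  define L where "L = xlist @ L2"
  have Ld: "distinct L" unfolding L_def using xlist_distinct L2 xlist_set by auto
  have Ls: "set L = B" unfolding L_def using xlist_set L2 B(1) by auto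
  have Llen: "length L = q" using distinct_card[OF Ld] Ls B(4) by simp
  have LC: "set L \<subseteq> carrier_vec q" using Ls B(2) by simp
  have Lk: "L ! k = xv k" if "k < p" for k
    unfolding L_def using xlist_nth[OF that] that by (simp add: nth_append xlist_def)
  define Q where "Q = mat_of_rows q L"
  have Qc: "Q \<in> carrier_mat q q" unfolding Q_def using Llen by (metis mat_of_rows_carrier(1))
  have Qidx: "Q $$ (l,j) = L ! l $ j" if "l < q" "j < q" for l j
    unfolding Q_def using that Llen by (simp add: mat_of_rows_index)
  have Qinv: "invertible_mat Q"
    unfolding Q_def using mat_of_rows_spanning_invertible[OF Ld LC Llen] B(5) Ls by simp
  have Qx: "\<forall>k<p. \<forall>j<q. Q $$ (k,j) = xs k j"
    using Qidx Lk pq unfolding xv_def by auto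
  have "\<exists>d. (\<forall>l<r. d l = 0) \<and> (\<forall>j<q. Rv a j = (\<Sum>l<q. d l * Q $$ (l,j)))" for a
  proof -
    obtain d where d: "\<forall>l. L ! l \<notin> B - X0 \<longrightarrow> d l = 0"
      "\<forall>j<q. vec q (Rv a) $ j = (\<Sum>l<length L. d l * L ! l $ j)"
      using span_list_coords[OF Ld LC _ BR[rule_format, of a]] Ls by auto
    have "d l = 0" if l: "l < r" for l
      using d(1) Lk[of l] l rp unfolding X0_def by auto
    moreover have "Rv a j = (\<Sum>l<q. d l * Q $$ (l,j))" if j: "j < q" for j
      using d(2) j Llen Qidx by simp
    ultimately show ?thesis by blast
  qed
  then show ?thesis using pq Qc Qinv Qx by blast
qed

end

(* Coordinates with respect to the rows of an invertible Q: if every Rv(a) is a combination of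
   the rows r .. q-1 of Q, the coefficients define a root-linear R : K \<rightarrow> K^(q-r) (coordinates
   are computed by the inverse of Q, hence inherit additivity and root-linearity). *)
lemma root_coordinates:
  fixes Rv :: "'a::field \<Rightarrow> nat \<Rightarrow> 'a"
  assumes Qc: "Q \<in> carrier_mat q q" and Qinv: "invertible_mat Q"
    and Radd: "\<And>x y j. j < q \<Longrightarrow> Rv (x + y) j = Rv x j + Rv y j"
    and Rroot: "\<And>l x j. j < q \<Longrightarrow> Rv (l^2 * x) j = l * Rv x j"
    and QW: "\<forall>a. \<exists>d. (\<forall>l<r. d l = 0) \<and> (\<forall>j<q. Rv a j = (\<Sum>l<q. d l * Q $$ (l,j)))"
  shows "\<exists>R. (\<forall>x. R x \<in> carrier_vec (q - r)) \<and> root_linear R \<and>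
           (\<forall>a j. j < q \<longrightarrow> Rv a j = (\<Sum>l<q. (if r \<le> l then R a $ (l - r) else 0) * Q $$ (l,j)))"
proof -
  obtain Qi where Qic: "Qi \<in> carrier_mat q q" and QQi: "Q * Qi = 1\<^sub>m q"
    using invertible_mat_right_inverse[OF Qc Qinv] by blast
  define coord where "coord a m = (\<Sum>j<q. Rv a j * Qi $$ (j,m))" for a m
  have coord_d: "coord a m = d m"
    if d: "\<forall>j<q. Rv a j = (\<Sum>l<q. d l * Q $$ (l,j))" and m: "m < q" for a m d
  proof -
    have "coord a m = (\<Sum>j<q. \<Sum>l<q. d l * (Q $$ (l,j) * Qi $$ (j,m)))"
      unfolding coord_def using d by (simp add: sum_distrib_right mult.assoc)
    also have "\<dots> = (\<Sum>l<q. d l * (\<Sum>j<q. Q $$ (l,j) * Qi $$ (j,m)))"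
      by (subst sum.swap) (simp add: sum_distrib_left)
    also have "\<dots> = (\<Sum>l<q. d l * (if l = m then 1 else 0))"
    proof (rule sum.cong[OF refl])
      fix l assume l: "l \<in> {..<q}"
      have "(\<Sum>j<q. Q $$ (l,j) * Qi $$ (j,m)) = (Q * Qi) $$ (l,m)"
        using l m Qc Qic by (simp add: scalar_prod_def lessThan_atLeast0)
      then show "d l * (\<Sum>j<q. Q $$ (l,j) * Qi $$ (j,m)) = d l * (if l = m then 1 else 0)"
        using QQi l m by simp
    qed
    also have "\<dots> = d m" using m by (rule sum_delta_right)
    finally show ?thesis .
  qed
  define R where "R x = vec (q - r) (\<lambda>t. coord x (r + t))" for x
  have Rc: "\<forall>x. R x \<in> carrier_vec (q - r)" unfolding R_def by auto
  have coord_add: "coord (x + y) m = coord x m + coord y m" for x y m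
    unfolding coord_def by (simp add: Radd distrib_right sum.distrib)
  have coord_root: "coord (l^2 * x) m = l * coord x m" for l x m
    unfolding coord_def by (simp add: Rroot sum_distrib_left mult.assoc)
  have Rl: "root_linear R"
    unfolding root_linear_def R_def using coord_add coord_root by (auto intro!: eq_vecI)
  have "Rv a j = (\<Sum>l<q. (if r \<le> l then R a $ (l - r) else 0) * Q $$ (l,j))" if j: "j < q" for a j
  proof -
    obtain d where d: "\<forall>l<r. d l = 0" "\<forall>j<q. Rv a j = (\<Sum>l<q. d l * Q $$ (l,j))" using QW by blast
    have "(if r \<le> l then R a $ (l - r) else 0) = d l" if l: "l < q" for l
      using coord_d[OF d(2) l] d(1) l unfolding R_def by auto
    then show ?thesis using d(2) j by simp
  qed
  then show ?thesis using Rc Rl by blast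
qed

lemma normal_form_entry:
  assumes M: "M \<in> carrier_mat n p" and pq: "p \<le> q" and Qc: "Q \<in> carrier_mat q q"
    and i: "i < n" and c: "c < q"
  shows "((pad_cols q M + root_corr r q R M) * Q) $$ (i,c)
       = (\<Sum>k<p. M $$ (i,k) * Q $$ (k,c))
         + (if i < r then (\<Sum>l<q. (if r \<le> l then R (M $$ (i,i)) $ (l - r) else 0) * Q $$ (l,c)) else 0)"
proof -
  have "pad_cols q M + root_corr r q R M \<in> carrier_mat n q"
    using add_carrier_mat[OF root_corr_carrier[OF M]] pad_cols_carrier[OF M] by blast
  then have "dim_row (pad_cols q M + root_corr r q R M) = n" "dim_col (pad_cols q M + root_corr r q R M) = q"
    by auto
  then have "((pad_cols q M + root_corr r q R M) * Q) $$ (i,c)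
      = (\<Sum>l<q. (pad_cols q M + root_corr r q R M) $$ (i,l) * Q $$ (l,c))"
    using i c Qc by (simp add: scalar_prod_def lessThan_atLeast0)
  also have "\<dots> = (\<Sum>l<q. (if l < p then M $$ (i,l) * Q $$ (l,c) else 0))
      + (\<Sum>l<q. (if i < r \<and> r \<le> l then R (M $$ (i,i)) $ (l - r) * Q $$ (l,c) else 0))"
    unfolding sum.distrib[symmetric] using i M pad_cols_carrier[OF M] root_corr_carrier[OF M]
    by (intro sum.cong) (auto simp: pad_cols_index root_corr_index distrib_right)
  also have "(\<Sum>l<q. (if l < p then M $$ (i,l) * Q $$ (l,c) else 0)) = (\<Sum>k<p. M $$ (i,k) * Q $$ (k,c))"
    by (rule sum_lessThan_restrict[OF pq])
  also have "(\<Sum>l<q. (if i < r \<and> r \<le> l then R (M $$ (i,i)) $ (l - r) * Q $$ (l,c) else 0))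
      = (if i < r then (\<Sum>l<q. (if r \<le> l then R (M $$ (i,i)) $ (l - r) else 0) * Q $$ (l,c)) else 0)"
    by (auto intro: sum.cong)
  finally show ?thesis .
qed

lemma (in range_preserving_hom) normal_form_exists:
  "p \<le> q \<and> (\<exists>Q R. Q \<in> carrier_mat q q \<and> invertible_mat Q \<and>
     (\<forall>x. R x \<in> carrier_vec (q - r)) \<and> root_linear R \<and>
     (\<forall>M \<in> S. F M = (pad_cols q M + root_corr r q R M) * Q))"
proof -
  have rho_root': "\<And>l x j. j < q \<Longrightarrow> rho (l^2 * x) j = l * rho x j"
    using rho_root by (simp add: mult.commute)
  interpret completion: row_completion "TYPE('a)" q p r xrow rho
    by unfold_locales (use rp rho_add rho_root' xrow_indep_mod_rho xrow_indep in blast)+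
  obtain Q where pq: "p \<le> q" and Qc: "Q \<in> carrier_mat q q" and Qinv: "invertible_mat Q"
    and Qx: "\<forall>k<p. \<forall>j<q. Q $$ (k,j) = xrow k j"
    and QW: "\<forall>a. \<exists>d. (\<forall>l<r. d l = 0) \<and> (\<forall>j<q. rho a j = (\<Sum>l<q. d l * Q $$ (l,j)))"
    using completion.completion_matrix by blast
  obtain R where Rc: "\<forall>x. R x \<in> carrier_vec (q - r)" and Rl: "root_linear R"
    and Rrho: "\<forall>a j. j < q \<longrightarrow> rho a j = (\<Sum>l<q. (if r \<le> l then R a $ (l - r) else 0) * Q $$ (l,j))"
    using root_coordinates[OF Qc Qinv rho_add rho_root' QW] by blast
  have "F M = (pad_cols q M + root_corr r q R M) * Q" if M: "M \<in> S" for M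
  proof (rule eq_matI)
    have Mc: "M \<in> carrier_mat n p" using M by (rule S_carrier)
    have NF: "(pad_cols q M + root_corr r q R M) * Q \<in> carrier_mat n q"
      by (rule mult_carrier_mat[OF add_carrier_mat[OF root_corr_carrier[OF Mc]] Qc])
    show "dim_row (F M) = dim_row ((pad_cols q M + root_corr r q R M) * Q)"
      "dim_col (F M) = dim_col ((pad_cols q M + root_corr r q R M) * Q)"
      using Fc M NF by (metis carrier_matD)+
    fix i c assume "i < dim_row ((pad_cols q M + root_corr r q R M) * Q)"
      "c < dim_col ((pad_cols q M + root_corr r q R M) * Q)"
    then have i: "i < n" and c: "c < q" using NF by auto
    show "F M $$ (i,c) = ((pad_cols q M + root_corr r q R M) * Q) $$ (i,c)"
      unfolding normal_form_entry[OF Mc pq Qc i c] F_eq_model[OF M] model_def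
      using i c Qx Rrho by simp
  qed
  then show ?thesis using pq Qc Qinv Rc Rl by blast
qed

theorem theorem7p7:
  fixes n p q r :: nat and F :: "'a :: field mat \<Rightarrow> 'a mat"
  assumes "CHAR('a) = 2"
    and "2 \<le> r" and "r \<le> n" and "r \<le> p"
    and "1 \<le> q"
  shows "((\<forall>M \<in> sym_vee_set r n p. F M \<in> carrier_mat n q) \<and>
          (\<forall>M \<in> sym_vee_set r n p. \<forall>N \<in> sym_vee_set r n p. F (M + N) = F M + F N) \<and>
          range_preserving_on (sym_vee_set r n p) F)
     \<longleftrightarrow>
         (p \<le> q \<and>
          (\<exists>Q R. Q \<in> carrier_mat q q \<and> invertible_mat Q \<and>
                 (\<forall>x. R x \<in> carrier_vec (q - r)) \<and> root_linear R \<and>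
                 (\<forall>M \<in> sym_vee_set r n p. F M = (pad_cols q M + root_corr r q R M) * Q)))"
  (is "?hom \<longleftrightarrow> ?normal_form")
proof
  assume ?hom
  then interpret range_preserving_hom F n p q r
    using assms char2_two_eq_0[OF assms(1)] by unfold_locales blast+
  show ?normal_form by (rule normal_form_exists)
next
  assume ?normal_form
  then show ?hom
    using normal_form_is_range_preserving_hom[where F=F and n=n] assms(3,4) by blast
qed

end
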